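(* Let $\mathcal{A}=\mathcal{A}_n^{\bar q,\Lambda}(\mathbb{K})$ with no $q_k$ a root of unity, and put $z_0=1$. Fix $1\le i\le n$. Suppose $a,b\in\mathcal{A}\setminus\mathbb{K}$ satisfy $ab=\alpha_0z_0+\sum_{j=1}^n\alpha_jz_j$ with $\alpha_0,\dots,\alpha_n\in\mathbb{K}$ and $\alpha_i\neq0$. Then there exist $\lambda,\mu\in\mathbb{K}^*$ such that either $a=\lambda y_i,\ b=\mu x_i$, or $a=\lambda x_i,\ b=\mu y_i$.
   Context: Let $\mathbb{K}$ be a field, $n\ge 1$, $\bar q=(q_1,\dots,q_n)\in(\mathbb{K}^* )^n$, and $\Lambda=(\lambda_{ij})$ an $n\times n$ matrix over $\mathbb{K}^*$ with $\lambda_{ij}=\lambda_{ji}^{-1}$, $\lambda_{ii}=1$. $\mathcal{A}_n^{\bar q,\Lambda}(\mathbb{K})$ is the $\mathbb{K}$-algebra generated by $x_1,y_1,\dots,x_n,y_n$ with relations: for $1\le i<j\le n$, $x_ix_j=\lambda_{ij}x_jx_i$, $y_jy_i=\lambda_{ji}y_iy_j$, $x_iy_j=\lambda_{ji}y_jx_i$, $x_jy_i=\lambda_{ij}y_ix_j$; and $x_iy_i-q_iy_ix_i=1$ for all $i$. Put $z_i=x_iy_i-y_ix_i$ for $i=1,\dots,n$. *)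

theory Defs
  imports Main
begin

text \<open>The free associative K-algebra on letters x_k, y_k, realised as functions
  from words to K (elements of interest are finitely supported), and the
  quantum generalized Weyl algebra A_n^{q,Lambda}(K) as its quotient by the
  two-sided ideal generated by the defining relations.\<close>

datatype gen = X nat | Y nat

fun gidx :: "gen \<Rightarrow> nat" where
  "gidx (X k) = k" | "gidx (Y k) = k"

type_synonym 'k ncpoly = "gen list \<Rightarrow> 'k"

definition ncmono :: "gen list \<Rightarrow> 'k::zero \<Rightarrow> 'k ncpoly" where
  "ncmono w c = (\<lambda>u. if u = w then c else 0)"

definition ncconst :: "'k::zero \<Rightarrow> 'k ncpoly" where
  "ncconst c = ncmono [] c"

definition ncgen :: "gen \<Rightarrow> 'k::{zero,one} ncpoly" where
  "ncgen g = ncmono [g] 1"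

definition ncadd :: "'k::plus ncpoly \<Rightarrow> 'k ncpoly \<Rightarrow> 'k ncpoly" where
  "ncadd f g = (\<lambda>u. f u + g u)"

definition ncsub :: "'k::minus ncpoly \<Rightarrow> 'k ncpoly \<Rightarrow> 'k ncpoly" where
  "ncsub f g = (\<lambda>u. f u - g u)"

definition ncsmult :: "'k::times \<Rightarrow> 'k ncpoly \<Rightarrow> 'k ncpoly" where
  "ncsmult c f = (\<lambda>u. c * f u)"

definition ncmul :: "'k::comm_semiring_1 ncpoly \<Rightarrow> 'k ncpoly \<Rightarrow> 'k ncpoly" where
  "ncmul f g = (\<lambda>u. \<Sum>k\<le>length u. f (take k u) * g (drop k u))"

definition free_elem :: "nat \<Rightarrow> 'k::zero ncpoly \<Rightarrow> bool" where
  "free_elem n f \<longleftrightarrow> finite {u. f u \<noteq> 0} \<and>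
     (\<forall>u. f u \<noteq> 0 \<longrightarrow> (\<forall>g\<in>set u. gidx g \<in> {1..n}))"

definition w2 :: "gen \<Rightarrow> gen \<Rightarrow> 'k::{zero,one} ncpoly" where
  "w2 g h = ncmono [g, h] 1"

definition weyl_rels :: "nat \<Rightarrow> (nat \<Rightarrow> 'k::comm_ring_1) \<Rightarrow> (nat \<Rightarrow> nat \<Rightarrow> 'k) \<Rightarrow> 'k ncpoly set" where
  "weyl_rels n q L =
     {ncsub (w2 (X i) (X j)) (ncsmult (L i j) (w2 (X j) (X i))) | i j. 1 \<le> i \<and> i < j \<and> j \<le> n}
   \<union> {ncsub (w2 (Y j) (Y i)) (ncsmult (L j i) (w2 (Y i) (Y j))) | i j. 1 \<le> i \<and> i < j \<and> j \<le> n}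
   \<union> {ncsub (w2 (X i) (Y j)) (ncsmult (L j i) (w2 (Y j) (X i))) | i j. 1 \<le> i \<and> i < j \<and> j \<le> n}
   \<union> {ncsub (w2 (X j) (Y i)) (ncsmult (L i j) (w2 (Y i) (X j))) | i j. 1 \<le> i \<and> i < j \<and> j \<le> n}
   \<union> {ncsub (ncsub (w2 (X i) (Y i)) (ncsmult (q i) (w2 (Y i) (X i)))) (ncconst 1) | i. 1 \<le> i \<and> i \<le> n}"

inductive_set nc_ideal :: "'k::comm_ring_1 ncpoly set \<Rightarrow> 'k ncpoly set" for R where
  zero: "(\<lambda>u. 0) \<in> nc_ideal R"
| gen: "r \<in> R \<Longrightarrow> r \<in> nc_ideal R"
| add: "p \<in> nc_ideal R \<Longrightarrow> p' \<in> nc_ideal R \<Longrightarrow> ncadd p p' \<in> nc_ideal R"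
| smult: "p \<in> nc_ideal R \<Longrightarrow> ncsmult c p \<in> nc_ideal R"
| mult: "p \<in> nc_ideal R \<Longrightarrow> ncmul (ncmono v 1) (ncmul p (ncmono w 1)) \<in> nc_ideal R"

definition weyl_eq :: "nat \<Rightarrow> (nat \<Rightarrow> 'k::comm_ring_1) \<Rightarrow> (nat \<Rightarrow> nat \<Rightarrow> 'k) \<Rightarrow> 'k ncpoly \<Rightarrow> 'k ncpoly \<Rightarrow> bool" where
  "weyl_eq n q L a b \<longleftrightarrow> ncsub a b \<in> nc_ideal (weyl_rels n q L)"

definition weyl_in_K :: "nat \<Rightarrow> (nat \<Rightarrow> 'k::comm_ring_1) \<Rightarrow> (nat \<Rightarrow> nat \<Rightarrow> 'k) \<Rightarrow> 'k ncpoly \<Rightarrow> bool" where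
  "weyl_in_K n q L a \<longleftrightarrow> (\<exists>c. weyl_eq n q L a (ncconst c))"

definition weyl_z :: "nat \<Rightarrow> 'k::comm_ring_1 ncpoly" where
  "weyl_z i = (if i = 0 then ncconst 1 else ncsub (w2 (X i) (Y i)) (w2 (Y i) (X i)))"

end

theory Submission
  imports Defs "HOL-Library.Function_Algebras" "HOL-Library.Multiset"
begin

text \<open>
  Read a function \<open>(nat \<Rightarrow> int) \<Rightarrow> K\<close> as a coefficient vector with respect to the ordered
  monomials \<open>y\<^sub>1\<^bsup>m 2\<^esup>\<cdots>y\<^sub>n\<^bsup>m (2n)\<^esup> x\<^sub>1\<^bsup>m 3\<^esup>\<cdots>x\<^sub>n\<^bsup>m (2n+1)\<^esup>\<close>. Left multiplication by the
  generators gives a representation \<open>rho\<close> of the free algebra in which every defining relation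
  acts by zero, so it factors through the quantum Weyl algebra. Sorting words shows that every
  element is equivalent to a combination of ordered words; an ordered word \<open>w\<close> sends the point
  mass \<open>\<delta>\<^sub>0\<close> to \<open>\<delta>\<^bsub>exp w\<^esub>\<close>, and an arbitrary word sends \<open>\<delta>\<^sub>p\<close> to a nonzero multiple of
  \<open>\<delta>\<^bsub>p + exp w\<^esub>\<close> plus terms of lower total degree.

  Apply \<open>ab\<close> to \<open>\<delta>\<^sub>0\<close> with \<open>a\<close>, \<open>b\<close> in ordered form. The lexicographically largest words of
  maximal length in \<open>a\<close> and \<open>b\<close> produce a term that cannot cancel, of degree
  \<open>deg a + deg b\<close>, while the \<open>z\<^sub>j\<close> only contribute in degrees 0 and 2; so \<open>a\<close> and \<open>b\<close> have
  degree 1. Comparing coefficients in degrees 1 and 2, where the monomial \<open>y\<^sub>i x\<^sub>i\<close> carries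
  \<open>\<alpha>\<^sub>i (q\<^sub>i - 1) \<noteq> 0\<close>, leaves only \<open>a \<sim> y\<^sub>i, b \<sim> x\<^sub>i\<close> or \<open>a \<sim> x\<^sub>i, b \<sim> y\<^sub>i\<close>.
\<close>

section \<open>A representation of the free algebra that kills the relations\<close>

definition twist :: "(nat \<Rightarrow> 'k::field) \<Rightarrow> nat set \<Rightarrow> (nat \<Rightarrow> nat) \<Rightarrow> (nat \<Rightarrow> int) \<Rightarrow> 'k" where
  "twist c S \<phi> m = (\<Prod>l\<in>S. c l powi m (\<phi> l))"

lemma twist_add:
  "finite S \<Longrightarrow> \<forall>l\<in>S. c l \<noteq> 0 \<Longrightarrow> twist c S \<phi> (m + e) = twist c S \<phi> m * twist c S \<phi> e"
  by (simp add: twist_def power_int_add prod.distrib[symmetric])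

lemma twist_nonzero: "finite S \<Longrightarrow> \<forall>l\<in>S. c l \<noteq> 0 \<Longrightarrow> twist c S \<phi> m \<noteq> 0"
  by (simp add: twist_def)

lemma twist_diff:
  assumes "finite S" "\<forall>l\<in>S. c l \<noteq> 0"
  shows "twist c S \<phi> (m - e) = twist c S \<phi> m / twist c S \<phi> e"
proof -
  have "twist c S \<phi> m = twist c S \<phi> (m - e) * twist c S \<phi> e"
    using twist_add[OF assms, of \<phi> "m - e" e] by simp
  then show ?thesis using twist_nonzero[OF assms] by (simp add: field_simps)
qed

lemma twist_mult: "twist c S \<phi> m * twist d S \<phi> m = twist (\<lambda>l. c l * d l) S \<phi> m"
  by (simp add: twist_def power_int_mult_distrib prod.distrib)

lemma twist_one: "\<forall>l\<in>S. c l = 1 \<Longrightarrow> twist c S \<phi> m = 1"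
  by (simp add: twist_def)

lemma twist_zero_exponent: "\<forall>l\<in>S. m (\<phi> l) = 0 \<Longrightarrow> twist c S \<phi> m = 1"
  by (simp add: twist_def)

definition eY :: "nat \<Rightarrow> nat \<Rightarrow> int" where "eY j = (\<lambda>k. if k = 2*j then 1 else 0)"
definition eX :: "nat \<Rightarrow> nat \<Rightarrow> int" where "eX j = (\<lambda>k. if k = 2*j+1 then 1 else 0)"

lemma eY_apply [simp]: "eY j k = (if k = 2*j then 1 else 0)" by (simp add: eY_def)
lemma eX_apply [simp]: "eX j k = (if k = 2*j+1 then 1 else 0)" by (simp add: eX_def)

lemma even_neq_odd [simp]: "2*a \<noteq> Suc (2*b)" "Suc (2*b) \<noteq> 2*a" by presburger+

lemma twist_eY_even: "finite S \<Longrightarrow> twist c S (\<lambda>k. 2*k) (eY i) = (if i \<in> S then c i else 1)"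
proof -
  assume "finite S"
  have "twist c S (\<lambda>k. 2*k) (eY i) = (\<Prod>l\<in>S. if l = i then c l else 1)"
    unfolding twist_def by (rule prod.cong) auto
  then show ?thesis using \<open>finite S\<close> by (simp add: prod.delta)
qed

lemma twist_eX_odd: "finite S \<Longrightarrow> twist c S (\<lambda>k. Suc (2*k)) (eX i) = (if i \<in> S then c i else 1)"
proof -
  assume "finite S"
  have "twist c S (\<lambda>k. Suc (2*k)) (eX i) = (\<Prod>l\<in>S. if l = i then c l else 1)"
    unfolding twist_def by (rule prod.cong) auto
  then show ?thesis using \<open>finite S\<close> by (simp add: prod.delta)
qed

lemma twist_eX_even: "twist c S (\<lambda>k. 2*k) (eX i) = 1"
  by (simp add: twist_def)

lemma twist_eY_odd: "twist c S (\<lambda>k. Suc (2*k)) (eY i) = 1"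
  by (simp add: twist_def)

locale qweyl =
  fixes n :: nat and q :: "nat \<Rightarrow> 'k::field" and L :: "nat \<Rightarrow> nat \<Rightarrow> 'k"
  assumes q_nz: "\<forall>k\<in>{1..n}. q k \<noteq> 0"
    and q_ne1: "\<forall>k\<in>{1..n}. q k \<noteq> 1"
    and L_nz: "\<forall>k\<in>{1..n}. \<forall>l\<in>{1..n}. L k l \<noteq> 0"
    and L_inv: "\<forall>k\<in>{1..n}. \<forall>l\<in>{1..n}. L k l * L l k = 1"
begin

text \<open>Left multiplication by \<open>y\<^sub>j\<close> and \<open>x\<^sub>j\<close> on coefficient vectors: the twists record the letter
  moving past smaller-indexed letters, and \<open>qint\<close> comes from
  \<open>x\<^sub>j y\<^sub>j\<^sup>a = q\<^sub>j\<^sup>a y\<^sub>j\<^sup>a x\<^sub>j + [a]\<^sub>q\<^sub>j y\<^sub>j\<^bsup>a-1\<^esup>\<close>.\<close>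

definition coef_Y :: "nat \<Rightarrow> (nat \<Rightarrow> int) \<Rightarrow> 'k" where
  "coef_Y j m = twist (\<lambda>k. L j k) {1..<j} (\<lambda>k. 2*k) m"
definition coef_X_deriv :: "nat \<Rightarrow> (nat \<Rightarrow> int) \<Rightarrow> 'k" where
  "coef_X_deriv j m = twist (\<lambda>k. L k j) {1..<j} (\<lambda>k. 2*k) m"
definition coef_X_shift :: "nat \<Rightarrow> (nat \<Rightarrow> int) \<Rightarrow> 'k" where
  "coef_X_shift j m = twist (\<lambda>k. L k j) {1..<j} (\<lambda>k. 2*k) m * q j powi m (2*j)
     * twist (\<lambda>k. L k j) {j<..n} (\<lambda>k. 2*k) m * twist (\<lambda>k. L j k) {1..<j} (\<lambda>k. Suc (2*k)) m"
definition qint :: "nat \<Rightarrow> int \<Rightarrow> 'k" where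
  "qint j a = (q j powi a - 1) / (q j - 1)"

definition act_Y :: "nat \<Rightarrow> ((nat \<Rightarrow> int) \<Rightarrow> 'k) \<Rightarrow> (nat \<Rightarrow> int) \<Rightarrow> 'k" where
  "act_Y j F = (\<lambda>m. coef_Y j m * F (m - eY j))"
definition act_X :: "nat \<Rightarrow> ((nat \<Rightarrow> int) \<Rightarrow> 'k) \<Rightarrow> (nat \<Rightarrow> int) \<Rightarrow> 'k" where
  "act_X j F = (\<lambda>m. coef_X_deriv j m * qint j (m (2*j) + 1) * F (m + eY j) + coef_X_shift j m * F (m - eX j))"

lemma L_nz_ranges:
  "j \<le> n \<Longrightarrow> \<forall>l\<in>{1..<j}. L j l \<noteq> 0"
  "j \<le> n \<Longrightarrow> 1 \<le> j \<Longrightarrow> \<forall>l\<in>{1..<j}. L l j \<noteq> 0"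
  "1 \<le> j \<Longrightarrow> \<forall>l\<in>{j<..n}. L l j \<noteq> 0"
  using L_nz by auto

lemma coef_Y_add: "j \<le> n \<Longrightarrow> coef_Y j (m + e) = coef_Y j m * coef_Y j e"
  unfolding coef_Y_def using L_nz_ranges by (intro twist_add) auto
lemma coef_Y_diff: "j \<le> n \<Longrightarrow> coef_Y j (m - e) = coef_Y j m / coef_Y j e"
  unfolding coef_Y_def using L_nz_ranges by (intro twist_diff) auto
lemma coef_Y_nonzero: "j \<le> n \<Longrightarrow> coef_Y j m \<noteq> 0"
  unfolding coef_Y_def using L_nz_ranges by (intro twist_nonzero) auto
lemma coef_Y_eY: "coef_Y j (eY i) = (if 1 \<le> i \<and> i < j then L j i else 1)"
  unfolding coef_Y_def by (simp add: twist_eY_even)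
lemma coef_Y_eX: "coef_Y j (eX i) = 1"
  unfolding coef_Y_def by (simp add: twist_eX_even)

lemma coef_X_deriv_add: "1 \<le> j \<Longrightarrow> j \<le> n \<Longrightarrow> coef_X_deriv j (m + e) = coef_X_deriv j m * coef_X_deriv j e"
  unfolding coef_X_deriv_def using L_nz_ranges by (intro twist_add) auto
lemma coef_X_deriv_diff: "1 \<le> j \<Longrightarrow> j \<le> n \<Longrightarrow> coef_X_deriv j (m - e) = coef_X_deriv j m / coef_X_deriv j e"
  unfolding coef_X_deriv_def using L_nz_ranges by (intro twist_diff) auto
lemma coef_X_deriv_nonzero: "1 \<le> j \<Longrightarrow> j \<le> n \<Longrightarrow> coef_X_deriv j m \<noteq> 0"
  unfolding coef_X_deriv_def using L_nz_ranges by (intro twist_nonzero) auto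
lemma coef_X_deriv_eY: "coef_X_deriv j (eY i) = (if 1 \<le> i \<and> i < j then L i j else 1)"
  unfolding coef_X_deriv_def by (simp add: twist_eY_even)
lemma coef_X_deriv_eX: "coef_X_deriv j (eX i) = 1"
  unfolding coef_X_deriv_def by (simp add: twist_eX_even)

lemma coef_X_shift_add:
  assumes j: "1 \<le> j" "j \<le> n"
  shows "coef_X_shift j (m + e) = coef_X_shift j m * coef_X_shift j e"
proof -
  have "q j \<noteq> 0" using q_nz j by auto
  then show ?thesis unfolding coef_X_shift_def
    using L_nz_ranges(1)[OF j(2)] L_nz_ranges(2)[OF j(2,1)] L_nz_ranges(3)[OF j(1)]
    by (simp add: twist_add power_int_add)
qed
lemma coef_X_shift_nonzero:
  assumes j: "1 \<le> j" "j \<le> n"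
  shows "coef_X_shift j m \<noteq> 0"
proof -
  have "q j \<noteq> 0" using q_nz j by auto
  then show ?thesis unfolding coef_X_shift_def
    using L_nz_ranges(1)[OF j(2)] L_nz_ranges(2)[OF j(2,1)] L_nz_ranges(3)[OF j(1)]
    by (simp add: twist_nonzero)
qed
lemma coef_X_shift_diff:
  assumes j: "1 \<le> j" "j \<le> n"
  shows "coef_X_shift j (m - e) = coef_X_shift j m / coef_X_shift j e"
proof -
  have "coef_X_shift j m = coef_X_shift j (m - e) * coef_X_shift j e"
    using coef_X_shift_add[OF j, of "m - e" e] by simp
  then show ?thesis using coef_X_shift_nonzero[OF j] by (simp add: field_simps)
qed
lemma coef_X_shift_eY: "1 \<le> j \<Longrightarrow> coef_X_shift j (eY i) = (if 1 \<le> i \<and> i < j then L i j else 1) *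
   (if i = j then q j else 1) * (if j < i \<and> i \<le> n then L i j else 1)"
  unfolding coef_X_shift_def by (simp add: twist_eY_even twist_eY_odd)
lemma coef_X_shift_eX: "coef_X_shift j (eX i) = (if 1 \<le> i \<and> i < j then L j i else 1)"
  unfolding coef_X_shift_def by (auto simp add: twist_eX_even twist_eX_odd)

lemma coef_Y_coef_X_deriv: "1 \<le> j \<Longrightarrow> j \<le> n \<Longrightarrow> coef_Y j m * coef_X_deriv j m = 1"
  unfolding coef_Y_def coef_X_deriv_def twist_mult using L_inv by (intro twist_one) auto

lemma qint_Suc: "1 \<le> j \<Longrightarrow> j \<le> n \<Longrightarrow> qint j (a + 1) = q j * qint j a + 1"
proof -
  assume j: "1 \<le> j" "j \<le> n"
  have "q j \<noteq> 0" "q j - 1 \<noteq> 0" using q_nz q_ne1 j by auto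
  then show ?thesis unfolding qint_def by (simp add: power_int_add field_simps)
qed

lemma act_X_expand:
  "act_X k G m = (coef_X_deriv k m * qint k (m (2*k) + 1)) * G (m + eY k) + coef_X_shift k m * G (m - eX k)"
  unfolding act_X_def by simp

lemma act_Y_act_Y:
  assumes ij: "1 \<le> i" "i < j" "j \<le> n"
  shows "act_Y j (act_Y i F) m = L j i * act_Y i (act_Y j F) m"
proof -
  have v: "m - eY j - eY i = m - eY i - eY j" by (simp add: algebra_simps)
  have "L j i * L i j = 1" "L j i \<noteq> 0" using L_inv L_nz ij by auto
  then show ?thesis using ij unfolding act_Y_def
    by (simp add: coef_Y_diff coef_Y_eY coef_Y_nonzero v field_simps)
qed

lemma act_X_act_X:
  assumes ij: "1 \<le> i" "i < j" "j \<le> n"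
  shows "act_X i (act_X j F) m = L i j * act_X j (act_X i F) m"
proof -
  have ne: "i \<noteq> j" "j \<noteq> i" and i1: "1 \<le> j" "i \<le> n" using ij by auto
  have v: "m + eY i + eY j = m + eY j + eY i" "m + eY i - eX j = m - eX j + eY i"
     "m - eX i + eY j = m + eY j - eX i" "m - eX i - eX j = m - eX j - eX i"
    by (simp_all add: algebra_simps)
  have l: "L j i * L i j = 1" "L j i \<noteq> 0" "L i j \<noteq> 0" using L_inv L_nz ij by auto
  define A where "A k m = coef_X_deriv k m * qint k (m (2*k) + 1)" for k m
  define B where "B k m = coef_X_shift k m" for k m
  have act: "act_X k G m = A k m * G (m + eY k) + B k m * G (m - eX k)" for k G m
    unfolding act_X_def A_def B_def by simp
  have A: "A j (m + eY i) = L i j * A j m" "A j (m - eX i) = A j m"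
      "A i (m + eY j) = A i m" "A i (m - eX j) = A i m"
    unfolding A_def using ij ne i1
    by (simp_all add: coef_X_deriv_add coef_X_deriv_diff coef_X_deriv_eY coef_X_deriv_eX coef_X_deriv_nonzero)
  have B: "B j (m + eY i) = L i j * B j m" "B j (m - eX i) = B j m / L j i"
      "B i (m + eY j) = L j i * B i m" "B i (m - eX j) = B i m"
    unfolding B_def using ij ne i1
    by (simp_all add: coef_X_shift_add coef_X_shift_diff coef_X_shift_eY coef_X_shift_eX coef_X_shift_nonzero)
  have lij: "L i j = 1 / L j i" using l by (simp add: field_simps)
  show ?thesis unfolding act A B v lij using l by (simp add: field_simps)
qed

lemma act_X_act_Y_less:
  assumes ij: "1 \<le> i" "i < j" "j \<le> n"
  shows "act_X i (act_Y j F) m = L j i * act_Y j (act_X i F) m"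
proof -
  have ne: "i \<noteq> j" "j \<noteq> i" and i1: "1 \<le> j" "i \<le> n" using ij by auto
  have v: "m + eY i - eY j = m - eY j + eY i" "m - eX i - eY j = m - eY j - eX i"
    by (simp_all add: algebra_simps)
  have l: "L j i * L i j = 1" "L j i \<noteq> 0" "L i j \<noteq> 0" using L_inv L_nz ij by auto
  have c: "coef_Y j (m + eY i) = coef_Y j m * L j i" "coef_Y j (m - eX i) = coef_Y j m"
     "coef_X_deriv i (m - eY j) = coef_X_deriv i m" "coef_X_shift i (m - eY j) = coef_X_shift i m / L j i"
    using ij ne i1 by (simp_all add: coef_Y_add coef_Y_diff coef_Y_eY coef_Y_eX coef_X_deriv_diff
        coef_X_deriv_eY coef_X_shift_diff coef_X_shift_eY)
  show ?thesis unfolding act_X_expand act_Y_def c v using l ne by (simp add: field_simps)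
qed

lemma act_X_act_Y_greater:
  assumes ij: "1 \<le> i" "i < j" "j \<le> n"
  shows "act_X j (act_Y i F) m = L i j * act_Y i (act_X j F) m"
proof -
  have ne: "i \<noteq> j" "j \<noteq> i" and i1: "1 \<le> j" "i \<le> n" using ij by auto
  have v: "m + eY j - eY i = m - eY i + eY j" "m - eX j - eY i = m - eY i - eX j"
    by (simp_all add: algebra_simps)
  have l: "L j i * L i j = 1" "L j i \<noteq> 0" "L i j \<noteq> 0" using L_inv L_nz ij by auto
  have c: "coef_Y i (m + eY j) = coef_Y i m" "coef_Y i (m - eX j) = coef_Y i m"
     "coef_X_deriv j (m - eY i) = coef_X_deriv j m / L i j"
     "coef_X_shift j (m - eY i) = coef_X_shift j m / L i j"
    using ij ne i1 by (simp_all add: coef_Y_add coef_Y_diff coef_Y_eY coef_Y_eX coef_X_deriv_diff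
        coef_X_deriv_eY coef_X_shift_diff coef_X_shift_eY)
  show ?thesis unfolding act_X_expand act_Y_def c v using l ne by (simp add: field_simps)
qed

lemma act_X_act_Y_same:
  assumes j: "1 \<le> j" "j \<le> n"
  shows "act_X j (act_Y j F) m = q j * act_Y j (act_X j F) m + F m"
proof -
  have v: "m - eX j - eY j = m - eY j - eX j" by (simp add: algebra_simps)
  have qs: "qint j (m (2*j) + 1) = q j * qint j (m (2*j)) + 1" using qint_Suc j by blast
  have "q j \<noteq> 0" using q_nz j by auto
  moreover have c: "coef_Y j (m + eY j) = coef_Y j m" "coef_Y j (m - eX j) = coef_Y j m"
     "coef_X_deriv j (m - eY j) = coef_X_deriv j m" "coef_X_shift j (m - eY j) = coef_X_shift j m / q j"
    using j by (simp_all add: coef_Y_add coef_Y_diff coef_Y_eY coef_Y_eX coef_X_deriv_diff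
        coef_X_deriv_eY coef_X_shift_diff coef_X_shift_eY)
  moreover have "coef_Y j m * coef_X_deriv j m = 1" using coef_Y_coef_X_deriv j by blast
  ultimately show ?thesis unfolding act_X_expand act_Y_def c v qs by (simp add: field_simps)
qed

end


definition supp :: "('a \<Rightarrow> 'k::zero) \<Rightarrow> 'a set" where "supp f = {u. f u \<noteq> 0}"

lemma supp_ncadd: "supp (ncadd p p') \<subseteq> supp p \<union> supp (p' :: 'k::monoid_add ncpoly)"
  by (auto simp: supp_def ncadd_def)
lemma supp_ncsub: "supp (ncsub p p') \<subseteq> supp p \<union> supp (p' :: 'k::ab_group_add ncpoly)"
  by (auto simp: supp_def ncsub_def)
lemma supp_ncsmult: "supp (ncsmult c p) \<subseteq> supp (p :: 'k::mult_zero ncpoly)"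
  by (auto simp: supp_def ncsmult_def)
lemma supp_ncmono: "supp (ncmono w (1::'k::zero_neq_one)) = {w}"
  by (auto simp: supp_def ncmono_def)

lemma finite_supp_lincomb:
  assumes "finite J" "\<forall>j\<in>J. finite (supp (h j))"
  shows "finite (supp (\<lambda>x. \<Sum>j\<in>J. (c j :: 'k::comm_ring_1) * h j x))"
proof -
  have "supp (\<lambda>x. \<Sum>j\<in>J. c j * h j x) \<subseteq> (\<Union>j\<in>J. supp (h j))"
  proof
    fix x assume "x \<in> supp (\<lambda>x. \<Sum>j\<in>J. c j * h j x)"
    then obtain j where "j \<in> J" "c j * h j x \<noteq> 0"
      unfolding supp_def using sum.not_neutral_contains_not_neutral by blast
    then show "x \<in> (\<Union>j\<in>J. supp (h j))" by (force simp: supp_def)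
  qed
  then show ?thesis using assms by (meson finite_UN_I finite_subset)
qed

lemma ncpoly_monomial_expansion:
  "finite (supp a) \<Longrightarrow> a = (\<lambda>x. \<Sum>w\<in>supp a. a w * ncmono w 1 x :: 'k::semiring_1)"
proof (rule ext)
  fix x assume "finite (supp a)"
  have "(\<Sum>w\<in>supp a. a w * ncmono w 1 x) = (\<Sum>w\<in>supp a. if x = w then a w else 0)"
    by (rule sum.cong) (auto simp: ncmono_def)
  also have "\<dots> = a x" using \<open>finite (supp a)\<close> by (simp add: sum.delta supp_def)
  finally show "a x = (\<Sum>w\<in>supp a. a w * ncmono w 1 x)" by simp
qed

lemma ncmul_ncmono_left:
  "ncmul (ncmono v c) g u = (if take (length v) u = v then c * g (drop (length v) u) else 0)"
proof -
  have "ncmul (ncmono v c) g u = (\<Sum>k\<le>length u. if k = length v then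
      (if take (length v) u = v then c * g (drop k u) else 0) else 0)"
    unfolding ncmul_def ncmono_def by (rule sum.cong) auto
  also have "\<dots> = (if take (length v) u = v then c * g (drop (length v) u) else 0)"
    by (auto simp: sum.delta' dest: arg_cong[where f=length])
  finally show ?thesis .
qed

lemma ncmul_ncmono_right: "ncmul f (ncmono w c) u =
   (if length w \<le> length u \<and> drop (length u - length w) u = w then f (take (length u - length w) u) * c else 0)"
proof -
  have "ncmul f (ncmono w c) u = (\<Sum>k\<le>length u. if k = length u - length w then
      (if length w \<le> length u \<and> drop (length u - length w) u = w then f (take k u) * c else 0) else 0)"
    unfolding ncmul_def ncmono_def by (rule sum.cong) auto
  also have "\<dots> = (if length w \<le> length u \<and> drop (length u - length w) u = w
      then f (take (length u - length w) u) * c else 0)"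
    by (simp add: sum.delta')
  finally show ?thesis .
qed

lemma ncmul_ncmono_ncmono: "ncmul (ncmono s 1) (ncmono v (1::'k::comm_semiring_1)) = ncmono (s @ v) 1"
proof (rule ext)
  fix x
  have "ncmul (ncmono s 1) (ncmono v (1::'k)) x = (if take (length s) x = s then ncmono v 1 (drop (length s) x) else 0)"
    by (simp add: ncmul_ncmono_left)
  moreover have "(take (length s) x = s \<and> drop (length s) x = v) = (x = s @ v)"
    by (metis append_eq_conv_conj)
  ultimately show "ncmul (ncmono s 1) (ncmono v (1::'k)) x = ncmono (s @ v) 1 x"
    by (auto simp: ncmono_def)
qed

lemma supp_ncmul_ncmono_left:
  "supp (ncmul (ncmono v 1) p) = (\<lambda>s. v @ s) ` supp (p :: 'k::comm_semiring_1 ncpoly)"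
  by (auto simp: supp_def ncmul_ncmono_left image_iff) (metis append_take_drop_id)

lemma supp_ncmul_ncmono_right:
  "supp (ncmul p (ncmono w 1)) = (\<lambda>s. s @ w) ` supp (p :: 'k::comm_semiring_1 ncpoly)"
  by (auto simp: supp_def ncmul_ncmono_right image_iff) (metis append_take_drop_id)

lemma ncmul_expand_left:
  assumes "finite (supp (a::'k::comm_semiring_1 ncpoly))"
  shows "ncmul a b = (\<lambda>x. \<Sum>w\<in>supp a. a w * ncmul (ncmono w 1) b x)"
proof (rule ext)
  fix x
  have "ncmul a b x = (\<Sum>k\<le>length x. \<Sum>w\<in>supp a. a w * ncmono w 1 (take k x) * b (drop k x))"
    by (subst ncpoly_monomial_expansion[OF assms]) (simp only: ncmul_def sum_distrib_right)
  also have "\<dots> = (\<Sum>w\<in>supp a. \<Sum>k\<le>length x. a w * ncmono w 1 (take k x) * b (drop k x))"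
    by (rule sum.swap)
  also have "\<dots> = (\<Sum>w\<in>supp a. a w * ncmul (ncmono w 1) b x)"
    unfolding ncmul_def by (simp only: sum_distrib_left mult.assoc)
  finally show "ncmul a b x = (\<Sum>w\<in>supp a. a w * ncmul (ncmono w 1) b x)" .
qed

lemma finite_supp_ncmul:
  assumes "finite (supp a)" "finite (supp b)"
  shows "finite (supp (ncmul a (b::'k::comm_ring_1 ncpoly)))"
  unfolding ncmul_expand_left[OF assms(1)]
  by (rule finite_supp_lincomb) (use assms in \<open>simp_all add: supp_ncmul_ncmono_left\<close>)

context qweyl
begin

definition act :: "gen \<Rightarrow> ((nat \<Rightarrow> int) \<Rightarrow> 'k) \<Rightarrow> (nat \<Rightarrow> int) \<Rightarrow> 'k" where
  "act g = (case g of Y j \<Rightarrow> act_Y j | X j \<Rightarrow> act_X j)"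

primrec act_word :: "gen list \<Rightarrow> ((nat \<Rightarrow> int) \<Rightarrow> 'k) \<Rightarrow> (nat \<Rightarrow> int) \<Rightarrow> 'k" where
  "act_word [] F = F"
| "act_word (g # w) F = act g (act_word w F)"

definition rho :: "'k ncpoly \<Rightarrow> ((nat \<Rightarrow> int) \<Rightarrow> 'k) \<Rightarrow> (nat \<Rightarrow> int) \<Rightarrow> 'k" where
  "rho f F m = (\<Sum>u\<in>supp f. f u * act_word u F m)"

lemma act_word_append: "act_word (v @ w) F = act_word v (act_word w F)"
  by (induction v) auto

lemma act_linear: "act g (\<lambda>m. c * F1 m + F2 m) m = c * act g F1 m + act g F2 m"
  by (cases g) (simp_all add: act_def act_Y_def act_X_def algebra_simps)

lemma act_sum: "act g (\<lambda>m. \<Sum>s\<in>S. c s * G s m) m = (\<Sum>s\<in>S. c s * act g (G s) m)"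
  by (cases g) (simp_all add: act_def act_Y_def act_X_def sum_distrib_left sum.distrib algebra_simps)

lemma act_word_sum: "act_word w (\<lambda>m. \<Sum>s\<in>S. c s * G s m) m = (\<Sum>s\<in>S. c s * act_word w (G s) m)"
proof (induction w arbitrary: m)
  case (Cons g w)
  then have "act_word w (\<lambda>m. \<Sum>s\<in>S. c s * G s m) = (\<lambda>m. \<Sum>s\<in>S. c s * act_word w (G s) m)" by auto
  then show ?case by (simp add: act_sum)
qed simp

lemma rho_superset: "finite S \<Longrightarrow> supp f \<subseteq> S \<Longrightarrow> rho f F m = (\<Sum>u\<in>S. f u * act_word u F m)"
  unfolding rho_def by (rule sum.mono_neutral_left) (auto simp: supp_def)

lemma rho_ncmono: "rho (ncmono w 1) F m = act_word w F m"
  unfolding rho_def supp_ncmono by (simp add: ncmono_def)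

lemma rho_ncadd: "finite (supp p) \<Longrightarrow> finite (supp p') \<Longrightarrow> rho (ncadd p p') F m = rho p F m + rho p' F m"
  using rho_superset[of "supp p \<union> supp p'" "ncadd p p'"] rho_superset[of "supp p \<union> supp p'" p]
     rho_superset[of "supp p \<union> supp p'" p'] supp_ncadd[of p p']
  by (simp add: ncadd_def algebra_simps sum.distrib)

lemma rho_ncsub: "finite (supp p) \<Longrightarrow> finite (supp p') \<Longrightarrow> rho (ncsub p p') F m = rho p F m - rho p' F m"
  using rho_superset[of "supp p \<union> supp p'" "ncsub p p'"] rho_superset[of "supp p \<union> supp p'" p]
     rho_superset[of "supp p \<union> supp p'" p'] supp_ncsub[of p p']
  by (simp add: ncsub_def algebra_simps sum_subtractf)

lemma rho_ncsmult: "finite (supp p) \<Longrightarrow> rho (ncsmult c p) F m = c * rho p F m"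
  using rho_superset[of "supp p" "ncsmult c p"] supp_ncsmult[of c p]
  by (simp add: ncsmult_def rho_def sum_distrib_left algebra_simps)

lemma rho_lincomb:
  assumes J: "finite J" "\<forall>j\<in>J. finite (supp (h j))"
  shows "rho (\<lambda>u. \<Sum>j\<in>J. c j * h j u) F m = (\<Sum>j\<in>J. c j * rho (h j) F m)"
proof -
  let ?S = "\<Union>j\<in>J. supp (h j)"
  have fS: "finite ?S" using J by auto
  have "supp (\<lambda>u. \<Sum>j\<in>J. c j * h j u) \<subseteq> ?S"
    by (auto simp: supp_def intro: ccontr)
  then have "rho (\<lambda>u. \<Sum>j\<in>J. c j * h j u) F m = (\<Sum>u\<in>?S. (\<Sum>j\<in>J. c j * h j u) * act_word u F m)"
    by (rule rho_superset[OF fS])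
  also have "\<dots> = (\<Sum>j\<in>J. c j * (\<Sum>u\<in>?S. h j u * act_word u F m))"
    by (simp add: sum_distrib_right sum_distrib_left sum.swap[of _ J] algebra_simps)
  also have "\<dots> = (\<Sum>j\<in>J. c j * rho (h j) F m)"
    by (rule sum.cong[OF refl]) (use J fS in \<open>auto intro!: rho_superset[symmetric]\<close>)
  finally show ?thesis .
qed

lemma rho_ncmul_ncmono_left:
  assumes "finite (supp p)"
  shows "rho (ncmul (ncmono v 1) p) F m = act_word v (rho p F) m"
proof -
  have "rho (ncmul (ncmono v 1) p) F m = (\<Sum>s\<in>supp p. p s * act_word v (act_word s F) m)"
    unfolding rho_def supp_ncmul_ncmono_left
    by (subst sum.reindex) (auto simp: inj_on_def ncmul_ncmono_left act_word_append)
  also have "\<dots> = act_word v (rho p F) m"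
    by (simp add: act_word_sum rho_def[abs_def])
  finally show ?thesis .
qed

lemma rho_ncmul_ncmono_right: "rho (ncmul p (ncmono w 1)) F m = rho p (act_word w F) m"
  unfolding rho_def supp_ncmul_ncmono_right
  by (subst sum.reindex) (auto simp: inj_on_def ncmul_ncmono_right act_word_append)

lemma rho_ncmul:
  assumes fa: "finite (supp a)" and fb: "finite (supp b)"
  shows "rho (ncmul a b) F m = rho a (rho b F) m"
proof -
  have "rho (ncmul a b) F m = (\<Sum>w\<in>supp a. a w * rho (ncmul (ncmono w 1) b) F m)"
    unfolding ncmul_expand_left[OF fa]
    by (rule rho_lincomb[OF fa]) (use fb in \<open>simp add: supp_ncmul_ncmono_left\<close>)
  also have "\<dots> = rho a (rho b F) m" using rho_ncmul_ncmono_left[OF fb] by (simp add: rho_def)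
  finally show ?thesis .
qed

lemma rho_commutation_zero:
  assumes gh: "g \<noteq> h" and comm: "\<And>F m. act g (act h F) m = c * act h (act g F) m"
    and r: "r = ncsub (w2 g h) (ncsmult c (w2 h g))"
  shows "finite (supp r) \<and> (\<forall>F m. rho r F m = 0)"
proof -
  have rv: "r u = (if u = [g,h] then 1 else 0) - c * (if u = [h,g] then 1 else 0)" for u
    unfolding r ncsub_def ncsmult_def w2_def ncmono_def by simp
  have "r u = 0" if "u \<noteq> [g,h]" "u \<noteq> [h,g]" for u using that by (simp add: rv)
  then have ss: "supp r \<subseteq> {[g,h],[h,g]}" unfolding supp_def by blast
  have "rho r F m = 0" for F m
  proof -
    have "rho r F m = (\<Sum>u\<in>{[g,h],[h,g]}. r u * act_word u F m)" by (rule rho_superset[OF _ ss]) simp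
    also have "\<dots> = act g (act h F) m - c * act h (act g F) m" using gh by (simp add: rv)
    finally show ?thesis using comm by simp
  qed
  then show ?thesis using ss finite_subset by blast
qed

lemma rho_relation_zero:
  assumes "r \<in> weyl_rels n q L"
  shows "finite (supp r) \<and> (\<forall>F m. rho r F m = 0)"
proof -
  from assms consider
      (XX) i j where "1 \<le> i" "i < j" "j \<le> n" "r = ncsub (w2 (X i) (X j)) (ncsmult (L i j) (w2 (X j) (X i)))"
    | (YY) i j where "1 \<le> i" "i < j" "j \<le> n" "r = ncsub (w2 (Y j) (Y i)) (ncsmult (L j i) (w2 (Y i) (Y j)))"
    | (XY) i j where "1 \<le> i" "i < j" "j \<le> n" "r = ncsub (w2 (X i) (Y j)) (ncsmult (L j i) (w2 (Y j) (X i)))"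
    | (YX) i j where "1 \<le> i" "i < j" "j \<le> n" "r = ncsub (w2 (X j) (Y i)) (ncsmult (L i j) (w2 (Y i) (X j)))"
    | (Weyl) i where "1 \<le> i" "i \<le> n"
        "r = ncsub (ncsub (w2 (X i) (Y i)) (ncsmult (q i) (w2 (Y i) (X i)))) (ncconst 1)"
    unfolding weyl_rels_def by blast
  then show ?thesis
  proof cases
    case XX then show ?thesis by (intro rho_commutation_zero) (simp_all add: act_def act_X_act_X)
  next
    case YY then show ?thesis by (intro rho_commutation_zero) (simp_all add: act_def act_Y_act_Y)
  next
    case XY then show ?thesis by (intro rho_commutation_zero) (simp_all add: act_def act_X_act_Y_less)
  next
    case YX then show ?thesis by (intro rho_commutation_zero) (simp_all add: act_def act_X_act_Y_greater)
  next
    case Weyl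
    have ss: "supp r \<subseteq> {[X i, Y i], [Y i, X i], []}" unfolding Weyl(3)
      by (auto simp: supp_def ncsub_def ncsmult_def w2_def ncmono_def ncconst_def)
    have "rho r F m = 0" for F m
    proof -
      have "rho r F m = (\<Sum>u\<in>{[X i, Y i], [Y i, X i], []}. r u * act_word u F m)"
        by (rule rho_superset[OF _ ss]) simp
      also have "\<dots> = act_X i (act_Y i F) m - q i * act_Y i (act_X i F) m - F m"
        unfolding Weyl(3) by (simp add: ncsub_def ncsmult_def w2_def ncmono_def ncconst_def act_def)
      finally show ?thesis using act_X_act_Y_same[OF Weyl(1,2)] by simp
    qed
    then show ?thesis using ss finite_subset by blast
  qed
qed

lemma rho_ideal_zero:
  "p \<in> nc_ideal (weyl_rels n q L) \<Longrightarrow> finite (supp p) \<and> (\<forall>F m. rho p F m = 0)"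
proof (induction rule: nc_ideal.induct)
  case zero then show ?case by (simp add: supp_def rho_def)
next
  case (gen r) then show ?case by (rule rho_relation_zero)
next
  case (add p p')
  then show ?case using supp_ncadd[of p p'] rho_ncadd[of p p'] by (auto intro: finite_subset)
next
  case (smult p c)
  then show ?case using supp_ncsmult[of c p] rho_ncsmult[of p c] by (auto intro: finite_subset)
next
  case (mult p v w)
  have f: "finite (supp (ncmul p (ncmono w 1)))"
    using mult.IH by (simp add: supp_ncmul_ncmono_right)
  have z: "rho (ncmul p (ncmono w 1)) F = (\<lambda>m. 0)" for F
    using mult.IH by (simp add: rho_ncmul_ncmono_right fun_eq_iff)
  have "act_word v (\<lambda>m. 0) m = 0" for m
    using act_word_sum[of v "\<lambda>_. 0" "\<lambda>_ _. 0" "{}"] by simp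
  then show ?case using f by (simp add: supp_ncmul_ncmono_left rho_ncmul_ncmono_left z)
qed

end

section \<open>Every element is equivalent to a combination of ordered words\<close>

definition sandwich :: "gen list \<Rightarrow> gen list \<Rightarrow> 'k::comm_semiring_1 ncpoly \<Rightarrow> 'k ncpoly" where
  "sandwich u v f = ncmul (ncmono u 1) (ncmul f (ncmono v 1))"

lemma sandwich_ncmono: "sandwich u v (ncmono s 1) = ncmono (u @ s @ v) (1::'k::comm_semiring_1)"
  unfolding sandwich_def ncmul_ncmono_ncmono by simp

lemma sandwich_lincomb2:
  "sandwich u v (\<lambda>x. c * A x + d * B x) = (\<lambda>x. c * sandwich u v A x + d * sandwich u v (B::'k::comm_ring_1 ncpoly) x)"
  by (rule ext) (simp add: sandwich_def ncmul_ncmono_left ncmul_ncmono_right algebra_simps)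

lemma sandwich_ncsub: "sandwich u v (ncsub A B) = ncsub (sandwich u v A) (sandwich u v (B::'k::comm_ring_1 ncpoly))"
  by (rule ext) (simp add: sandwich_def ncsub_def ncmul_ncmono_left ncmul_ncmono_right algebra_simps)

lemma not_sorted_adjacent_descent:
  "\<not> sorted (map f w) \<Longrightarrow> \<exists>u g h v. w = u @ g # h # v \<and> f h < (f g :: 'b::linorder)"
proof (induction w)
  case (Cons x w)
  show ?case
  proof (cases "\<not> sorted (map f w)")
    case True
    then obtain u g h v where "w = u @ g # h # v" "f h < f g" using Cons.IH by blast
    then show ?thesis by (metis append_Cons)
  next
    case False
    then obtain y w' where "w = y # w'" "f y < f x" using Cons.prems by (cases w) auto
    then show ?thesis by (metis append_Nil)
  qed
qed simp

lemma weyl_rels_XX: "1 \<le> i \<Longrightarrow> i < j \<Longrightarrow> j \<le> n \<Longrightarrow>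
    ncsub (w2 (X i) (X j)) (ncsmult (L i j) (w2 (X j) (X i))) \<in> weyl_rels n q L"
  unfolding weyl_rels_def by (intro UnI1) blast

lemma weyl_rels_YY: "1 \<le> i \<Longrightarrow> i < j \<Longrightarrow> j \<le> n \<Longrightarrow>
    ncsub (w2 (Y j) (Y i)) (ncsmult (L j i) (w2 (Y i) (Y j))) \<in> weyl_rels n q L"
  unfolding weyl_rels_def by (rule UnI1, rule UnI1, rule UnI1, rule UnI2) blast

lemma weyl_rels_XY_less: "1 \<le> i \<Longrightarrow> i < j \<Longrightarrow> j \<le> n \<Longrightarrow>
    ncsub (w2 (X i) (Y j)) (ncsmult (L j i) (w2 (Y j) (X i))) \<in> weyl_rels n q L"
  unfolding weyl_rels_def by (rule UnI1, rule UnI1, rule UnI2) blast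

lemma weyl_rels_XY_greater: "1 \<le> i \<Longrightarrow> i < j \<Longrightarrow> j \<le> n \<Longrightarrow>
    ncsub (w2 (X j) (Y i)) (ncsmult (L i j) (w2 (Y i) (X j))) \<in> weyl_rels n q L"
  unfolding weyl_rels_def by (rule UnI1, rule UnI2) blast

lemma weyl_rels_XY_same: "1 \<le> j \<Longrightarrow> j \<le> n \<Longrightarrow>
    ncsub (ncsub (w2 (X j) (Y j)) (ncsmult (q j) (w2 (Y j) (X j)))) (ncconst 1) \<in> weyl_rels n q L"
  unfolding weyl_rels_def by (rule UnI2) blast

context qweyl
begin

abbreviation weq :: "'k ncpoly \<Rightarrow> 'k ncpoly \<Rightarrow> bool" where
  "weq \<equiv> weyl_eq n q L"

lemma weq_refl: "weq f f"
proof -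
  have "ncsub f f = (\<lambda>u. 0)" by (rule ext) (simp add: ncsub_def)
  then show ?thesis unfolding weyl_eq_def by (simp add: nc_ideal.zero)
qed

lemma weq_smult: "weq f g \<Longrightarrow> weq (ncsmult c f) (ncsmult c g)"
proof -
  assume "weq f g"
  then have "ncsmult c (ncsub f g) \<in> nc_ideal (weyl_rels n q L)"
    unfolding weyl_eq_def by (rule nc_ideal.smult)
  moreover have "ncsmult c (ncsub f g) = ncsub (ncsmult c f) (ncsmult c g)"
    by (rule ext) (simp add: ncsub_def ncsmult_def algebra_simps)
  ultimately show ?thesis unfolding weyl_eq_def by simp
qed

lemma weq_sym: "weq f g \<Longrightarrow> weq g f"
proof -
  assume "weq f g"
  then have "ncsmult (-1) (ncsub f g) \<in> nc_ideal (weyl_rels n q L)"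
    unfolding weyl_eq_def by (rule nc_ideal.smult)
  moreover have "ncsmult (-1) (ncsub f g) = ncsub g f" by (rule ext) (simp add: ncsub_def ncsmult_def)
  ultimately show ?thesis unfolding weyl_eq_def by simp
qed

lemma weq_trans: "weq f g \<Longrightarrow> weq g h \<Longrightarrow> weq f h"
proof -
  assume "weq f g" "weq g h"
  then have "ncadd (ncsub f g) (ncsub g h) \<in> nc_ideal (weyl_rels n q L)"
    unfolding weyl_eq_def by (rule nc_ideal.add)
  moreover have "ncadd (ncsub f g) (ncsub g h) = ncsub f h" by (rule ext) (simp add: ncsub_def ncadd_def)
  ultimately show ?thesis unfolding weyl_eq_def by simp
qed

lemma weq_lincomb2: "weq A A' \<Longrightarrow> weq B B' \<Longrightarrow> weq (\<lambda>x. c * A x + d * B x) (\<lambda>x. c * A' x + d * B' x)"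
proof -
  assume "weq A A'" "weq B B'"
  then have "ncadd (ncsmult c (ncsub A A')) (ncsmult d (ncsub B B')) \<in> nc_ideal (weyl_rels n q L)"
    unfolding weyl_eq_def by (intro nc_ideal.add nc_ideal.smult)
  moreover have "ncadd (ncsmult c (ncsub A A')) (ncsmult d (ncsub B B'))
      = ncsub (\<lambda>x. c * A x + d * B x) (\<lambda>x. c * A' x + d * B' x)"
    by (rule ext) (simp add: ncsub_def ncadd_def ncsmult_def algebra_simps)
  ultimately show ?thesis unfolding weyl_eq_def by simp
qed

lemma weq_sandwich: "weq A B \<Longrightarrow> weq (sandwich u v A) (sandwich u v B)"
  unfolding weyl_eq_def sandwich_ncsub[symmetric] unfolding sandwich_def by (rule nc_ideal.mult)

lemma weq_sum:
  "finite S \<Longrightarrow> (\<And>s. s \<in> S \<Longrightarrow> weq (f s) (g s)) \<Longrightarrow>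
   weq (\<lambda>x. \<Sum>s\<in>S. c s * f s x) (\<lambda>x. \<Sum>s\<in>S. c s * g s x)"
proof (induction S rule: finite_induct)
  case empty then show ?case using weq_refl by simp
next
  case (insert s S)
  have "weq (\<lambda>x. c s * f s x + 1 * (\<Sum>s\<in>S. c s * f s x)) (\<lambda>x. c s * g s x + 1 * (\<Sum>s\<in>S. c s * g s x))"
    using insert by (intro weq_lincomb2) auto
  then show ?case using insert by simp
qed

lemma weq_relation: "ncsub A B \<in> weyl_rels n q L \<Longrightarrow> weq A B"
  unfolding weyl_eq_def by (rule nc_ideal.gen)

definition rank :: "gen \<Rightarrow> nat" where "rank g = (case g of Y j \<Rightarrow> j | X j \<Rightarrow> n + j)"

definition admissible :: "gen list \<Rightarrow> bool" where
  "admissible w \<longleftrightarrow> (\<forall>g\<in>set w. gidx g \<in> {1..n})"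

definition ordered :: "gen list \<Rightarrow> bool" where
  "ordered w \<longleftrightarrow> sorted (map rank w) \<and> admissible w"

definition ordered_poly :: "'k ncpoly \<Rightarrow> bool" where
  "ordered_poly f \<longleftrightarrow> finite (supp f) \<and> (\<forall>w\<in>supp f. ordered w)"

primrec disorder :: "gen list \<Rightarrow> nat" where
  "disorder [] = 0"
| "disorder (g # w) = rank g * length w + disorder w"

lemma disorder_swap: "rank h < rank g \<Longrightarrow> disorder (u @ h # g # v) < disorder (u @ g # h # v)"
  by (induction u) (simp_all add: algebra_simps)

lemma weq_smult_swap:
  assumes AB: "weq A (ncsmult c B)" and dc: "d * c = 1"
  shows "weq B (ncsmult d A)"
proof -
  have "weq (ncsmult d A) (ncsmult d (ncsmult c B))" using AB by (rule weq_smult)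
  moreover have "ncsmult d (ncsmult c B) = B"
    using dc unfolding ncsmult_def by (simp add: mult.assoc[symmetric])
  ultimately have "weq (ncsmult d A) B" by simp
  then show ?thesis by (rule weq_sym)
qed

lemma weq_x_y_same:
  assumes j: "1 \<le> j" "j \<le> n"
  shows "weq (w2 (X j) (Y j)) (\<lambda>x. q j * w2 (Y j) (X j) x + 1 * ncmono [] 1 x)"
proof (rule weq_relation)
  have "ncsub (ncsub (w2 (X j) (Y j)) (ncsmult (q j) (w2 (Y j) (X j)))) (ncconst 1)
      = ncsub (w2 (X j) (Y j)) (\<lambda>x. q j * w2 (Y j) (X j) x + 1 * ncmono [] 1 x)"
    by (rule ext) (simp add: ncsub_def ncsmult_def ncconst_def)
  then show "ncsub (w2 (X j) (Y j)) (\<lambda>x. q j * w2 (Y j) (X j) x + 1 * ncmono [] 1 x) \<in> weyl_rels n q L"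
    using weyl_rels_XY_same[OF j, where q=q and L=L] by (simp only:)
qed

lemma swap_descent:
  assumes g: "gidx g \<in> {1..n}" and h: "gidx h \<in> {1..n}" and r: "rank h < rank g"
  shows "\<exists>c d. weq (w2 g h) (\<lambda>x. c * w2 h g x + d * ncmono [] 1 x)"
proof -
  have scaled: "\<exists>c d. weq (w2 g h) (\<lambda>x. c * w2 h g x + d * ncmono [] 1 x)"
    if "weq (w2 g h) (ncsmult c (w2 h g))" for c
    using that by (intro exI[of _ c] exI[of _ 0]) (simp add: ncsmult_def)
  show ?thesis
  proof (cases g; cases h)
    fix j i assume gh: "g = Y j" "h = Y i"
    have "1 \<le> i" "i < j" "j \<le> n" using g h r unfolding gh by (auto simp: rank_def)
    then have "ncsub (w2 g h) (ncsmult (L j i) (w2 h g)) \<in> weyl_rels n q L"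
      unfolding gh by (rule weyl_rels_YY)
    then show ?thesis by (intro scaled weq_relation)
  next
    fix j i assume gh: "g = Y j" "h = X i"
    have "j \<le> n" using g unfolding gh by simp
    then show ?thesis using r unfolding gh by (simp add: rank_def)
  next
    fix j i assume gh: "g = X j" "h = Y i"
    have i: "1 \<le> i" "i \<le> n" and j: "1 \<le> j" "j \<le> n" using g h unfolding gh by auto
    consider "i < j" | "j < i" | "i = j" by linarith
    then show ?thesis
    proof cases
      case 1
      then have "ncsub (w2 g h) (ncsmult (L i j) (w2 h g)) \<in> weyl_rels n q L"
        using i j unfolding gh by (intro weyl_rels_XY_greater)
      then show ?thesis by (intro scaled weq_relation)
    next
      case 2
      then have "ncsub (w2 g h) (ncsmult (L i j) (w2 h g)) \<in> weyl_rels n q L"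
        using i j unfolding gh by (intro weyl_rels_XY_less)
      then show ?thesis by (intro scaled weq_relation)
    next
      case 3
      then show ?thesis using weq_x_y_same[OF j] unfolding gh by blast
    qed
  next
    fix j i assume gh: "g = X j" "h = X i"
    have ij: "1 \<le> i" "i < j" "j \<le> n" using g h r unfolding gh by (auto simp: rank_def)
    then have "ncsub (w2 h g) (ncsmult (L i j) (w2 g h)) \<in> weyl_rels n q L"
      unfolding gh by (rule weyl_rels_XX)
    then have "weq (w2 h g) (ncsmult (L i j) (w2 g h))" by (rule weq_relation)
    then have "weq (w2 g h) (ncsmult (L j i) (w2 h g))"
      by (rule weq_smult_swap) (use L_inv ij in simp)
    then show ?thesis by (rule scaled)
  qed
qed

lemma ordered_form_word:
  "admissible w \<Longrightarrow> \<exists>f. ordered_poly f \<and> weq (ncmono w 1) f"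
proof (induction w rule: wf_induct[OF wf_measures[of "[length, disorder]"]])
  case (1 w)
  show ?case
  proof (cases "sorted (map rank w)")
    case True
    then show ?thesis using 1 weq_refl
      by (intro exI[of _ "ncmono w 1"]) (simp add: ordered_poly_def ordered_def supp_ncmono)
  next
    case False
    then obtain u g h v where w: "w = u @ g # h # v" and r: "rank h < rank g"
      using not_sorted_adjacent_descent by blast
    have "gidx g \<in> {1..n}" "gidx h \<in> {1..n}" using 1 w by (auto simp: admissible_def)
    then obtain c d where "weq (w2 g h) (\<lambda>x. c * w2 h g x + d * ncmono [] 1 x)"
      using swap_descent r by blast
    then have "weq (sandwich u v (w2 g h)) (sandwich u v (\<lambda>x. c * w2 h g x + d * ncmono [] 1 x))"
      by (rule weq_sandwich)
    then have swapped: "weq (ncmono w 1) (\<lambda>x. c * ncmono (u @ h # g # v) 1 x + d * ncmono (u @ v) 1 x)"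
      unfolding sandwich_lincomb2 w2_def sandwich_ncmono w by simp
    have adm: "admissible (u @ h # g # v)" "admissible (u @ v)" using 1 w by (auto simp: admissible_def)
    have "(u @ h # g # v, w) \<in> measures [length, disorder]" using disorder_swap[OF r, of u v] w by simp
    then obtain f1 where f1: "ordered_poly f1" "weq (ncmono (u @ h # g # v) 1) f1"
      using 1 adm by blast
    have "(u @ v, w) \<in> measures [length, disorder]" using w by simp
    then obtain f2 where f2: "ordered_poly f2" "weq (ncmono (u @ v) 1) f2"
      using 1 adm by blast
    let ?f = "\<lambda>x. c * f1 x + d * f2 x"
    have "supp ?f \<subseteq> supp f1 \<union> supp f2" by (auto simp: supp_def)
    then have "ordered_poly ?f" using f1 f2 by (auto simp: ordered_poly_def intro: finite_subset)
    moreover have "weq (ncmono w 1) ?f" using swapped weq_lincomb2[OF f1(2) f2(2)] weq_trans by blast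
    ultimately show ?thesis by blast
  qed
qed

lemma ordered_form:
  assumes fa: "finite (supp a)" and adm: "\<forall>w\<in>supp a. admissible w"
  shows "\<exists>f. ordered_poly f \<and> weq a f"
proof -
  obtain F where F: "\<And>w. w \<in> supp a \<Longrightarrow> ordered_poly (F w) \<and> weq (ncmono w 1) (F w)"
    using ordered_form_word adm by metis
  let ?f = "\<lambda>x. \<Sum>w\<in>supp a. a w * F w x"
  have ss: "supp ?f \<subseteq> (\<Union>w\<in>supp a. supp (F w))"
  proof
    fix x assume "x \<in> supp ?f"
    then obtain w where "w \<in> supp a" "a w * F w x \<noteq> 0"
      unfolding supp_def using sum.not_neutral_contains_not_neutral by blast
    then show "x \<in> (\<Union>w\<in>supp a. supp (F w))" by (force simp: supp_def)
  qed
  have "ordered_poly ?f"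
    using finite_supp_lincomb[OF fa, of F a] F ss by (auto simp: ordered_poly_def)
  moreover have "weq a ?f"
    using weq_sum[OF fa, of "\<lambda>w. ncmono w 1" F a] F ncpoly_monomial_expansion[OF fa] by auto
  ultimately show ?thesis by blast
qed

end

section \<open>Ordered words act on the point masses by shifting\<close>

definition slot :: "gen \<Rightarrow> nat" where "slot g = (case g of Y j \<Rightarrow> 2*j | X j \<Rightarrow> Suc (2*j))"
definition gen_exp :: "gen \<Rightarrow> nat \<Rightarrow> int" where "gen_exp g = (case g of Y j \<Rightarrow> eY j | X j \<Rightarrow> eX j)"
definition word_exp :: "gen list \<Rightarrow> nat \<Rightarrow> int" where
  "word_exp w = (\<lambda>p. int (length (filter (\<lambda>g. slot g = p) w)))"
definition delta :: "(nat \<Rightarrow> int) \<Rightarrow> (nat \<Rightarrow> int) \<Rightarrow> 'k::zero_neq_one" where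
  "delta e = (\<lambda>m. if m = e then 1 else 0)"

lemma gen_exp_apply: "gen_exp g k = (if k = slot g then 1 else 0)"
  by (cases g) (auto simp: gen_exp_def slot_def)

lemma slot_inj: "slot g = slot h \<Longrightarrow> g = h"
  by (cases g; cases h) (auto simp: slot_def)

lemma slot_surj: "\<exists>g. slot g = p"
proof (cases "even p")
  case True then show ?thesis by (intro exI[of _ "Y (p div 2)"]) (auto simp: slot_def)
next
  case False then show ?thesis by (intro exI[of _ "X (p div 2)"]) (auto simp: slot_def elim: oddE)
qed

lemma word_exp_Nil [simp]: "word_exp [] = 0" by (auto simp: word_exp_def)

lemma word_exp_Cons: "word_exp (g # w) = gen_exp g + word_exp w"
  by (rule ext) (auto simp: word_exp_def gen_exp_apply)

lemma word_exp_append: "word_exp (w @ v) = word_exp w + word_exp v"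
  by (induction w) (simp_all add: word_exp_Cons add.assoc)

lemma word_exp_slot: "word_exp w (slot g) = int (count (mset w) g)"
proof -
  have "filter (\<lambda>h. slot h = slot g) w = filter ((=) g) w"
    by (rule filter_cong) (auto dest: slot_inj)
  then show ?thesis by (simp add: word_exp_def count_mset count_list_eq_length_filter)
qed

lemma word_exp_eq_iff: "word_exp w = word_exp v \<longleftrightarrow> mset w = mset v"
proof
  assume e: "word_exp w = word_exp v"
  have "count (mset w) g = count (mset v) g" for g
    using fun_cong[OF e, of "slot g"] by (simp add: word_exp_slot)
  then show "mset w = mset v" by (rule multiset_eqI)
next
  assume m: "mset w = mset v"
  show "word_exp w = word_exp v"
  proof (rule ext)
    fix p obtain g where "slot g = p" using slot_surj by blast
    then show "word_exp w p = word_exp v p" using m by (metis word_exp_slot)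
  qed
qed

context qweyl
begin

text \<open>Only coordinates below \<open>2n+2\<close> are counted; they are the only ones admissible words touch.\<close>

definition tdeg :: "(nat \<Rightarrow> int) \<Rightarrow> int" where "tdeg e = (\<Sum>k<2*n+2. e k)"

lemma tdeg_add: "tdeg (a + b) = tdeg a + tdeg b" by (simp add: tdeg_def sum.distrib)
lemma tdeg_diff: "tdeg (a - b) = tdeg a - tdeg b" by (simp add: tdeg_def sum_subtractf)
lemma tdeg_zero [simp]: "tdeg 0 = 0" by (simp add: tdeg_def)

lemma tdeg_gen_exp: "gidx g \<in> {1..n} \<Longrightarrow> tdeg (gen_exp g) = 1"
proof -
  assume g: "gidx g \<in> {1..n}"
  then have "slot g < 2*n+2" by (cases g) (auto simp: slot_def)
  then show ?thesis by (simp add: tdeg_def gen_exp_apply)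
qed

lemma tdeg_eY: "1 \<le> j \<Longrightarrow> j \<le> n \<Longrightarrow> tdeg (eY j) = 1"
  using tdeg_gen_exp[of "Y j"] by (simp add: gen_exp_def)
lemma tdeg_eX: "1 \<le> j \<Longrightarrow> j \<le> n \<Longrightarrow> tdeg (eX j) = 1"
  using tdeg_gen_exp[of "X j"] by (simp add: gen_exp_def)

lemma tdeg_word_exp: "admissible w \<Longrightarrow> tdeg (word_exp w) = int (length w)"
  by (induction w) (auto simp: admissible_def word_exp_Cons tdeg_add tdeg_gen_exp)

lemma act_Y_delta:
  assumes j: "j \<le> n" and below: "\<forall>k\<in>{1..<j}. e (2*k) = 0"
  shows "act (Y j) (delta e) = delta (e + eY j)"
proof (rule ext)
  fix m
  have "coef_Y j e = 1" unfolding coef_Y_def using below by (intro twist_zero_exponent) auto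
  then have "coef_Y j (e + eY j) = 1" using j by (simp add: coef_Y_add coef_Y_eY)
  moreover have "(m - eY j = e) = (m = e + eY j)" by (auto simp: algebra_simps)
  ultimately show "act (Y j) (delta e) m = delta (e + eY j) m"
    by (auto simp: act_def act_Y_def delta_def)
qed

lemma act_X_delta:
  assumes j: "1 \<le> j" "j \<le> n" and no_Y: "\<forall>k\<in>{1..n}. e (2*k) = 0"
    and below: "\<forall>k\<in>{1..<j}. e (Suc (2*k)) = 0"
  shows "act (X j) (delta e) = delta (e + eX j)"
proof (rule ext)
  fix m
  have "coef_X_shift j e = 1" unfolding coef_X_shift_def using no_Y below j by (simp add: twist_zero_exponent)
  then have "coef_X_shift j (e + eX j) = 1" using j by (simp add: coef_X_shift_add coef_X_shift_eX)
  moreover have "(m - eX j = e) = (m = e + eX j)" by (auto simp: algebra_simps)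
  moreover have "qint j (m (2*j) + 1) = 0" if "m + eY j = e"
    using fun_cong[OF that, of "2*j"] no_Y j by (simp add: qint_def)
  ultimately show "act (X j) (delta e) m = delta (e + eX j) m"
    by (auto simp: act_def act_X_def delta_def)
qed

lemma word_exp_absent: "h \<notin> set w \<Longrightarrow> word_exp w (slot h) = 0"
  by (simp add: word_exp_slot)

lemma act_word_ordered_delta: "ordered w \<Longrightarrow> act_word w (delta 0) = delta (word_exp w)"
proof (induction w)
  case (Cons g w)
  have "ordered w" using Cons.prems by (simp add: ordered_def admissible_def)
  then have IH: "act_word w (delta 0) = delta (word_exp w)" by (rule Cons.IH)
  have ranks: "\<And>h. h \<in> set w \<Longrightarrow> rank g \<le> rank h" and g: "gidx g \<in> {1..n}"
    using Cons.prems by (auto simp: ordered_def admissible_def)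
  have "act g (delta (word_exp w)) = delta (word_exp w + gen_exp g)"
  proof (cases g)
    case (Y j)
    have "Y k \<notin> set w" if "k < j" for k using ranks that Y by (force simp: rank_def)
    then have "\<forall>k\<in>{1..<j}. word_exp w (2*k) = 0" using word_exp_absent[of "Y _" w] by (auto simp: slot_def)
    then show ?thesis using g Y by (simp add: act_Y_delta gen_exp_def)
  next
    case (X j)
    have "Y k \<notin> set w" if "k \<le> n" for k using ranks that g X by (force simp: rank_def)
    then have "\<forall>k\<in>{1..n}. word_exp w (2*k) = 0" using word_exp_absent[of "Y _" w] by (auto simp: slot_def)
    moreover have "X k \<notin> set w" if "k < j" for k using ranks that X by (force simp: rank_def)
    then have "\<forall>k\<in>{1..<j}. word_exp w (Suc (2*k)) = 0" using word_exp_absent[of "X _" w] by (auto simp: slot_def)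
    ultimately show ?thesis using g X by (simp add: act_X_delta gen_exp_def)
  qed
  then show ?case by (simp only: act_word.simps IH word_exp_Cons add.commute)
qed simp

lemma rank_inj_on: "admissible w \<Longrightarrow> inj_on rank (set w)"
proof (rule inj_onI)
  fix g h assume "admissible w" "g \<in> set w" "h \<in> set w" and r: "rank g = rank h"
  then have "gidx g \<in> {1..n}" "gidx h \<in> {1..n}" by (auto simp: admissible_def)
  then show "g = h" using r by (cases g; cases h) (auto simp: rank_def)
qed

lemma ordered_word_exp_inj: "ordered w \<Longrightarrow> ordered w' \<Longrightarrow> word_exp w = word_exp w' \<Longrightarrow> w = w'"
proof -
  assume w: "ordered w" and w': "ordered w'" and "word_exp w = word_exp w'"
  then have "mset w = mset w'" by (simp add: word_exp_eq_iff)
  then have "sort_key rank w = w'"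
    using rank_inj_on w w' by (intro sort_key_inj_key_eq) (auto simp: ordered_def)
  moreover have "sort_key rank w = w"
    using rank_inj_on w by (intro sort_key_inj_key_eq) (auto simp: ordered_def)
  ultimately show ?thesis by simp
qed

section \<open>Arbitrary words: the leading term\<close>

definition deg_le :: "int \<Rightarrow> ((nat \<Rightarrow> int) \<Rightarrow> 'k) \<Rightarrow> bool" where
  "deg_le D F \<longleftrightarrow> (\<forall>M. F M \<noteq> 0 \<longrightarrow> tdeg M \<le> D)"

lemma deg_le_add: "deg_le D F \<Longrightarrow> deg_le D G \<Longrightarrow> deg_le D (\<lambda>M. F M + G M)"
  unfolding deg_le_def by (metis add_0)

lemma deg_le_scale: "deg_le D F \<Longrightarrow> deg_le D (\<lambda>M. c * F M)"
  by (auto simp: deg_le_def)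

lemma deg_le_mono: "deg_le D F \<Longrightarrow> D \<le> D' \<Longrightarrow> deg_le D' F"
  by (force simp: deg_le_def)

lemma deg_le_act:
  assumes g: "gidx g \<in> {1..n}" and F: "deg_le D F"
  shows "deg_le (D + 1) (act g F)"
  unfolding deg_le_def
proof (intro allI impI)
  fix M assume nz: "act g F M \<noteq> 0"
  show "tdeg M \<le> D + 1"
  proof (cases g)
    case (Y j)
    then have "tdeg (M - eY j) \<le> D" using nz F by (auto simp: deg_le_def act_def act_Y_def)
    then show ?thesis using g Y by (simp add: tdeg_diff tdeg_eY)
  next
    case (X j)
    then have "F (M + eY j) \<noteq> 0 \<or> F (M - eX j) \<noteq> 0" using nz by (auto simp: act_def act_X_def)
    then have "tdeg (M + eY j) \<le> D \<or> tdeg (M - eX j) \<le> D" using F by (auto simp: deg_le_def)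
    then show ?thesis using g X by (auto simp: tdeg_diff tdeg_add tdeg_eY tdeg_eX)
  qed
qed

text \<open>The coefficient of the shift term of \<open>act g\<close>, evaluated at the point where
  it sends \<open>delta e\<close>.\<close>

definition lead_factor :: "gen \<Rightarrow> (nat \<Rightarrow> int) \<Rightarrow> 'k" where
  "lead_factor g e = (case g of Y j \<Rightarrow> coef_Y j (e + eY j) | X j \<Rightarrow> coef_X_shift j (e + eX j))"

primrec word_lc :: "gen list \<Rightarrow> (nat \<Rightarrow> int) \<Rightarrow> 'k" where
  "word_lc [] p = 1"
| "word_lc (g # w) p = lead_factor g (p + word_exp w) * word_lc w p"

lemma lead_factor_nonzero: "gidx g \<in> {1..n} \<Longrightarrow> lead_factor g e \<noteq> 0"
  by (cases g) (auto simp: lead_factor_def coef_Y_nonzero coef_X_shift_nonzero)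

lemma word_lc_nonzero: "admissible w \<Longrightarrow> word_lc w p \<noteq> 0"
  by (induction w) (auto simp: admissible_def lead_factor_nonzero)

lemma act_delta_leading:
  assumes g: "gidx g \<in> {1..n}"
  shows "deg_le (tdeg e - 1) (\<lambda>M. act g (delta e) M - lead_factor g e * delta (e + gen_exp g) M)"
proof (cases g)
  case (Y j)
  have "(M - eY j = e) = (M = e + eY j)" for M by (auto simp: algebra_simps)
  then show ?thesis using Y by (auto simp: deg_le_def act_def act_Y_def delta_def lead_factor_def gen_exp_def)
next
  case (X j)
  have "(M - eX j = e) = (M = e + eX j)" for M by (auto simp: algebra_simps)
  moreover have "tdeg M \<le> tdeg e - 1" if "M + eY j = e" for M
    using g X that tdeg_add[of M "eY j"] by (auto simp: tdeg_eY)
  ultimately show ?thesis using X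
    by (auto simp: deg_le_def act_def act_X_def delta_def lead_factor_def gen_exp_def)
qed

lemma act_word_delta_leading:
  "admissible w \<Longrightarrow>
   deg_le (tdeg p + int (length w) - 2) (\<lambda>M. act_word w (delta p) M - word_lc w p * delta (p + word_exp w) M)"
proof (induction w)
  case Nil
  then show ?case by (simp add: deg_le_def)
next
  case (Cons g w)
  have w: "admissible w" and g: "gidx g \<in> {1..n}" using Cons.prems by (auto simp: admissible_def)
  define R where "R M = act_word w (delta p) M - word_lc w p * delta (p + word_exp w) M" for M
  define S where "S M = act g (delta (p + word_exp w)) M
      - lead_factor g (p + word_exp w) * delta (p + word_exp w + gen_exp g) M" for M
  have R: "deg_le (tdeg p + int (length w) - 2) R"
    unfolding R_def[abs_def] using Cons.IH[OF w] .
  have S: "deg_le (tdeg p + int (length w) - 1) S"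
    using act_delta_leading[OF g, of "p + word_exp w"]
    unfolding S_def[abs_def] tdeg_add tdeg_word_exp[OF w] .
  have split: "act_word (g # w) (delta p) M - word_lc (g # w) p * delta (p + word_exp (g # w)) M
      = act g R M + word_lc w p * S M" for M
  proof -
    have "act_word w (delta p) = (\<lambda>M. word_lc w p * delta (p + word_exp w) M + R M)"
      by (simp add: R_def)
    then have "act_word (g # w) (delta p) M = word_lc w p * act g (delta (p + word_exp w)) M + act g R M"
      by (simp add: act_linear)
    then show ?thesis
      by (simp add: S_def word_exp_Cons add.assoc add.commute[of "word_exp w"] algebra_simps)
  qed
  have "deg_le (tdeg p + int (length (g # w)) - 2) (\<lambda>M. act g R M + word_lc w p * S M)"
    using deg_le_act[OF g R] deg_le_scale[OF S] by (auto intro: deg_le_add deg_le_mono)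
  then show ?case by (simp only: split)
qed

lemma act_word_delta_top:
  assumes "admissible w" and "tdeg M \<ge> tdeg p + int (length w) - 1"
  shows "act_word w (delta p) M = word_lc w p * delta (p + word_exp w) M"
  using act_word_delta_leading[OF assms(1), of p] assms(2) by (force simp: deg_le_def)

end

section \<open>Comparing both sides of the product\<close>

definition lex_less :: "(nat \<Rightarrow> int) \<Rightarrow> (nat \<Rightarrow> int) \<Rightarrow> bool" where
  "lex_less e e' \<longleftrightarrow> (\<exists>k. e k < e' k \<and> (\<forall>j<k. e j = e' j))"

lemma lex_less_irrefl: "\<not> lex_less e e"
  by (auto simp: lex_less_def)

lemma lex_less_trans: "lex_less a b \<Longrightarrow> lex_less b c \<Longrightarrow> lex_less a c"
proof -
  assume "lex_less a b" "lex_less b c"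
  then obtain k1 k2 where k1: "a k1 < b k1" "\<forall>j<k1. a j = b j" and k2: "b k2 < c k2" "\<forall>j<k2. b j = c j"
    by (auto simp: lex_less_def)
  then show ?thesis unfolding lex_less_def
    by (intro exI[of _ "min k1 k2"]) (cases k1 k2 rule: linorder_cases; auto)
qed

lemma lex_less_total: "e \<noteq> e' \<Longrightarrow> lex_less e e' \<or> lex_less e' e"
proof -
  assume "e \<noteq> e'"
  then obtain k0 where "e k0 \<noteq> e' k0" by auto
  define k where "k = (LEAST k. e k \<noteq> e' k)"
  have "e k \<noteq> e' k" unfolding k_def by (rule LeastI[of _ k0]) fact
  moreover have "\<forall>j<k. e j = e' j" unfolding k_def using not_less_Least by blast
  ultimately show ?thesis unfolding lex_less_def by (metis linorder_neqE)
qed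

lemma lex_less_add_right: "lex_less e e' \<Longrightarrow> lex_less (e + h) (e' + h)"
  by (auto simp: lex_less_def)

lemma lex_less_add_left: "lex_less e e' \<Longrightarrow> lex_less (h + e) (h + e')"
  using lex_less_add_right[of e e' h] by (simp add: add.commute)

lemma finite_has_lex_max: "finite S \<Longrightarrow> S \<noteq> {} \<Longrightarrow> \<exists>x\<in>S. \<forall>y\<in>S. y = x \<or> lex_less y x"
proof (induction S rule: finite_ne_induct)
  case (insert x F)
  then obtain m where m: "m \<in> F" "\<forall>y\<in>F. y = m \<or> lex_less y m" by blast
  show ?case
  proof (cases "lex_less m x")
    case True
    then show ?thesis using m lex_less_trans by (intro bexI[of _ x]) auto
  next
    case False
    then have "x = m \<or> lex_less x m" using lex_less_total by blast
    then show ?thesis using m by (intro bexI[of _ m]) auto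
  qed
qed simp

context qweyl
begin

lemma weq_rho: "weq a f \<Longrightarrow> finite (supp a) \<Longrightarrow> finite (supp f) \<Longrightarrow> rho a F M = rho f F M"
  using rho_ideal_zero[of "ncsub a f"] rho_ncsub[of a f F M] by (simp add: weyl_eq_def)

lemma rho_weyl_z:
  assumes j: "j \<in> {1..n}"
  shows "rho (weyl_z j) (delta 0) M = (q j - 1) * delta (word_exp [Y j, X j]) M + delta 0 M"
proof -
  have ordered: "ordered [Y j, X j]" using j by (auto simp: ordered_def admissible_def rank_def)
  have "rho (weyl_z j) (delta 0) M = act_word [X j, Y j] (delta 0) M - act_word [Y j, X j] (delta 0) M"
    using j rho_ncsub[of "ncmono [X j, Y j] 1" "ncmono [Y j, X j] 1"]
    by (simp add: weyl_z_def w2_def rho_ncmono supp_ncmono)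
  moreover have "act_word [X j, Y j] (delta 0) M = q j * act_Y j (act_X j (delta 0)) M + delta 0 M"
    using act_X_act_Y_same[of j "delta 0" M] j by (simp add: act_def)
  moreover have "act_Y j (act_X j (delta 0)) M = delta (word_exp [Y j, X j]) M"
    using act_word_ordered_delta[OF ordered] by (simp add: act_def)
  ultimately show ?thesis using act_word_ordered_delta[OF ordered] by (simp add: algebra_simps)
qed

lemma finite_supp_weyl_z: "finite (supp (weyl_z j :: 'k ncpoly))"
proof (cases "j = 0")
  case False
  have "supp (weyl_z j :: 'k ncpoly) \<subseteq> supp (w2 (X j) (Y j) :: 'k ncpoly) \<union> supp (w2 (Y j) (X j) :: 'k ncpoly)"
    using False supp_ncsub by (simp add: weyl_z_def)
  then show ?thesis by (simp add: w2_def supp_ncmono finite_subset)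
qed (simp add: weyl_z_def ncconst_def supp_ncmono)

text \<open>Off the origin, \<open>z\<^sub>0 = 1\<close> and the constant parts of the \<open>z\<^sub>j\<close> are invisible.\<close>

lemma rho_z_combination:
  assumes M: "M \<noteq> 0"
  shows "rho (\<lambda>u. \<Sum>j=0..n. \<alpha> j * weyl_z j u) (delta 0) M
       = (\<Sum>j\<in>{1..n}. \<alpha> j * (q j - 1) * delta (word_exp [Y j, X j]) M)"
proof -
  have d0: "(delta 0 M :: 'k) = 0" using M by (simp add: delta_def)
  have z0: "rho (weyl_z 0) (delta 0) M = 0"
    using rho_ncmono[of "[]" "delta 0" M] d0 by (simp add: weyl_z_def ncconst_def)
  have "rho (\<lambda>u. \<Sum>j=0..n. \<alpha> j * weyl_z j u) (delta 0) M = (\<Sum>j\<in>{0..n}. \<alpha> j * rho (weyl_z j) (delta 0) M)"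
    by (rule rho_lincomb) (simp_all add: finite_supp_weyl_z)
  also have "\<dots> = \<alpha> 0 * rho (weyl_z 0) (delta 0) M + (\<Sum>j\<in>{1..n}. \<alpha> j * rho (weyl_z j) (delta 0) M)"
    by (simp add: sum.atLeast_Suc_atMost)
  also have "\<dots> = (\<Sum>j\<in>{1..n}. \<alpha> j * (q j - 1) * delta (word_exp [Y j, X j]) M)"
    unfolding z0 by (simp add: rho_weyl_z d0 mult.assoc)
  finally show ?thesis .
qed

lemma rho_ordered_poly_delta0:
  "ordered_poly f \<Longrightarrow> rho f (delta 0) = (\<lambda>M. \<Sum>w\<in>supp f. f w * delta (word_exp w) M)"
  unfolding rho_def ordered_poly_def by (intro ext sum.cong) (auto simp: act_word_ordered_delta)

lemma product_identity:
  assumes a: "finite (supp a)" "ordered_poly fa" "weq a fa"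
    and b: "finite (supp b)" "ordered_poly fb" "weq b fb"
    and ab: "weq (ncmul a b) (\<lambda>u. \<Sum>j=0..n. \<alpha> j * weyl_z j u)"
    and M: "M \<noteq> 0"
  shows "rho fa (rho fb (delta 0)) M = (\<Sum>j\<in>{1..n}. \<alpha> j * (q j - 1) * delta (word_exp [Y j, X j]) M)"
proof -
  have fin: "finite (supp fa)" "finite (supp fb)" using a b by (simp_all add: ordered_poly_def)
  have "rho b (delta 0) = rho fb (delta 0)" using weq_rho[OF b(3) b(1) fin(2)] by (simp add: fun_eq_iff)
  then have "rho fa (rho fb (delta 0)) M = rho (ncmul a b) (delta 0) M"
    using rho_ncmul[OF a(1) b(1)] weq_rho[OF a(3) a(1) fin(1)] by simp
  also have "\<dots> = rho (\<lambda>u. \<Sum>j=0..n. \<alpha> j * weyl_z j u) (delta 0) M"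
    by (rule weq_rho[OF ab finite_supp_ncmul[OF a(1) b(1)] finite_supp_lincomb])
       (simp_all add: finite_supp_weyl_z)
  also have "\<dots> = (\<Sum>j\<in>{1..n}. \<alpha> j * (q j - 1) * delta (word_exp [Y j, X j]) M)"
    by (rule rho_z_combination[OF M])
  finally show ?thesis .
qed

lemma nonconstant_has_nonempty_word:
  assumes "finite (supp f)" "weq a f" "\<not> weyl_in_K n q L a"
  shows "\<exists>w\<in>supp f. w \<noteq> []"
proof (rule ccontr)
  assume "\<not> (\<exists>w\<in>supp f. w \<noteq> [])"
  then have "f = ncconst (f [])" by (auto simp: fun_eq_iff ncconst_def ncmono_def supp_def)
  then show False using assms(2,3) by (metis weyl_in_K_def)
qed

text \<open>The contribution of a pair of words to the top-degree part of the product.\<close>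

definition top_pair :: "'k ncpoly \<Rightarrow> 'k ncpoly \<Rightarrow> (nat \<Rightarrow> int) \<Rightarrow> gen list \<times> gen list \<Rightarrow> 'k" where
  "top_pair fa fb M p = fa (fst p) * fb (snd p) * word_lc (fst p) (word_exp (snd p))
     * delta (word_exp (snd p) + word_exp (fst p)) M"

lemma rho_product_top:
  assumes fa: "ordered_poly fa" and fb: "ordered_poly fb"
    and high: "\<forall>w\<in>supp fa. \<forall>v\<in>supp fb. tdeg M \<ge> int (length v) + int (length w) - 1"
  shows "rho fa (rho fb (delta 0)) M = sum (top_pair fa fb M) (supp fa \<times> supp fb)"
proof -
  have adm: "w \<in> supp fa \<Longrightarrow> admissible w" "v \<in> supp fb \<Longrightarrow> admissible v" for w v
    using fa fb by (auto simp: ordered_poly_def ordered_def)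
  have "rho fa (rho fb (delta 0)) M = (\<Sum>w\<in>supp fa. fa w * (\<Sum>v\<in>supp fb. fb v * act_word w (delta (word_exp v)) M))"
    unfolding rho_ordered_poly_delta0[OF fb] by (simp add: rho_def act_word_sum)
  also have "\<dots> = (\<Sum>w\<in>supp fa. \<Sum>v\<in>supp fb. top_pair fa fb M (w, v))"
    unfolding sum_distrib_left
  proof (intro sum.cong refl)
    fix w v assume w: "w \<in> supp fa" and v: "v \<in> supp fb"
    then have "act_word w (delta (word_exp v)) M = word_lc w (word_exp v) * delta (word_exp v + word_exp w) M"
      using high tdeg_word_exp[OF adm(2)[OF v]] by (intro act_word_delta_top adm) auto
    then show "fa w * (fb v * act_word w (delta (word_exp v)) M) = top_pair fa fb M (w, v)"
      by (simp add: top_pair_def)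
  qed
  also have "\<dots> = sum (top_pair fa fb M) (supp fa \<times> supp fb)"
    by (simp add: sum.cartesian_product case_prod_unfold)
  finally show ?thesis .
qed

lemma lex_top_word:
  assumes f: "ordered_poly f" and nonconst: "\<exists>w\<in>supp f. w \<noteq> []"
  shows "\<exists>w0\<in>supp f. length w0 = Max (length ` supp f) \<and> Max (length ` supp f) \<ge> 1 \<and>
     (\<forall>w\<in>supp f. length w = Max (length ` supp f) \<longrightarrow>
        word_exp w = word_exp w0 \<or> lex_less (word_exp w) (word_exp w0))"
proof -
  let ?d = "Max (length ` supp f)" and ?top = "{w\<in>supp f. length w = Max (length ` supp f)}"
  have fin: "finite (supp f)" using f by (simp add: ordered_poly_def)
  obtain w1 where w1: "w1 \<in> supp f" "w1 \<noteq> []" using nonconst by blast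
  have d1: "?d \<ge> 1"
    using w1 fin by (metis Max_ge finite_imageI image_eqI le_trans length_greater_0_conv less_one not_le)
  have "?d \<in> length ` supp f" using fin w1 by (intro Max_in) auto
  then have "word_exp ` ?top \<noteq> {}" by auto
  moreover have "finite (word_exp ` ?top)" using fin by simp
  ultimately obtain x where x: "x \<in> word_exp ` ?top" "\<forall>y\<in>word_exp ` ?top. y = x \<or> lex_less y x"
    using finite_has_lex_max by blast
  then obtain w0 where "w0 \<in> ?top" "word_exp w0 = x" by auto
  then show ?thesis using x d1 by (intro bexI[of _ w0]) auto
qed

text \<open>The product of the two lexicographically largest top-length words cannot cancel.\<close>

lemma unique_top_decomposition:
  assumes fa: "ordered_poly fa" and fb: "ordered_poly fb"
    and w0: "w0 \<in> supp fa" "\<forall>w\<in>supp fa. length w \<le> length w0"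
      "\<forall>w\<in>supp fa. length w = length w0 \<longrightarrow> word_exp w = word_exp w0 \<or> lex_less (word_exp w) (word_exp w0)"
    and v0: "v0 \<in> supp fb" "\<forall>v\<in>supp fb. length v \<le> length v0"
      "\<forall>v\<in>supp fb. length v = length v0 \<longrightarrow> word_exp v = word_exp v0 \<or> lex_less (word_exp v) (word_exp v0)"
    and w: "w \<in> supp fa" and v: "v \<in> supp fb"
    and e: "word_exp v + word_exp w = word_exp v0 + word_exp w0"
  shows "w = w0 \<and> v = v0"
proof -
  have ord: "\<And>u. u \<in> supp fa \<Longrightarrow> ordered u" "\<And>u. u \<in> supp fb \<Longrightarrow> ordered u"
    using fa fb by (auto simp: ordered_poly_def)
  have tdeg_sum: "tdeg (word_exp v' + word_exp w') = int (length v') + int (length w')"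
    if "ordered v'" "ordered w'" for v' w'
    using that by (simp add: tdeg_add tdeg_word_exp ordered_def)
  have "int (length v) + int (length w) = int (length v0) + int (length w0)"
    using e tdeg_sum[OF ord(2)[OF v] ord(1)[OF w]] tdeg_sum[OF ord(2)[OF v0(1)] ord(1)[OF w0(1)]] by simp
  then have len: "length w = length w0" "length v = length v0" using w0(2) v0(2) w v by fastforce+
  have "word_exp w = word_exp w0"
  proof (rule ccontr)
    assume "word_exp w \<noteq> word_exp w0"
    then have "lex_less (word_exp v + word_exp w) (word_exp v + word_exp w0)"
      using w0(3) w len by (blast intro: lex_less_add_left)
    moreover have "word_exp v = word_exp v0 \<or> lex_less (word_exp v) (word_exp v0)" using v0(3) v len by blast
    then have "word_exp v + word_exp w0 = word_exp v0 + word_exp w0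
        \<or> lex_less (word_exp v + word_exp w0) (word_exp v0 + word_exp w0)"
      by (elim disjE) (simp_all add: lex_less_add_right)
    ultimately show False using e lex_less_trans lex_less_irrefl by metis
  qed
  moreover have "word_exp v = word_exp v0" using e calculation by simp
  ultimately show ?thesis using ordered_word_exp_inj ord w v w0(1) v0(1) by blast
qed

end

lemma mset_append_eq_pair:
  assumes m: "mset (v @ w) = mset [g, h]" and "length w \<le> 1" "length v \<le> 1"
  shows "(w, v) = ([h], [g]) \<or> (w, v) = ([g], [h])"
proof -
  have "length (v @ w) = 2" using m by (metis size_mset length_Cons list.size(3) numeral_2_eq_2)
  then obtain x y where "w = [x]" "v = [y]" using assms(2,3)
    by (cases w; cases v) (auto simp: le_Suc_eq)
  then show ?thesis using m by (auto simp: add_eq_conv_ex)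
qed

lemma mset_append_eq_single:
  assumes m: "mset (v @ w) = mset [g]"
  shows "(w, v) = ([], [g]) \<or> (w, v) = ([g], [])"
proof -
  have "length (v @ w) = 1" using m by (metis size_mset length_Cons list.size(3) One_nat_def)
  then have "(v = [] \<and> length w = 1) \<or> (w = [] \<and> length v = 1)" by (cases v) auto
  then show ?thesis using m by (auto simp: length_Suc_conv)
qed

locale ordered_product = qweyl n q L for n :: nat and q :: "nat \<Rightarrow> 'k::field" and L +
  fixes fa fb :: "'k ncpoly" and \<alpha> :: "nat \<Rightarrow> 'k"
  assumes fa: "ordered_poly fa" and fb: "ordered_poly fb"
    and product: "\<And>M. M \<noteq> 0 \<Longrightarrow> rho fa (rho fb (delta 0)) M
       = (\<Sum>j\<in>{1..n}. \<alpha> j * (q j - 1) * delta (word_exp [Y j, X j]) M)"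
    and fa_nonconst: "\<exists>w\<in>supp fa. w \<noteq> []" and fb_nonconst: "\<exists>w\<in>supp fb. w \<noteq> []"
begin

definition target :: "(nat \<Rightarrow> int) \<Rightarrow> 'k" where
  "target M = (\<Sum>j\<in>{1..n}. \<alpha> j * (q j - 1) * delta (word_exp [Y j, X j]) M)"

lemma finite_supp: "finite (supp fa)" "finite (supp fb)"
  using fa fb by (simp_all add: ordered_poly_def)

lemma admissible_supp: "w \<in> supp fa \<Longrightarrow> admissible w" "v \<in> supp fb \<Longrightarrow> admissible v"
  using fa fb by (auto simp: ordered_poly_def ordered_def)

lemma target_tdeg: "tdeg M \<noteq> 2 \<Longrightarrow> target M = 0"
  unfolding target_def
proof (intro sum.neutral ballI)
  fix j assume "tdeg M \<noteq> 2" "j \<in> {1..n}"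
  then have "M \<noteq> word_exp [Y j, X j]" using tdeg_word_exp[of "[Y j, X j]"] by (auto simp: admissible_def)
  then show "\<alpha> j * (q j - 1) * delta (word_exp [Y j, X j]) M = 0" by (simp add: delta_def)
qed

lemma target_eq_top_pairs:
  assumes "M \<noteq> 0" "\<forall>w\<in>supp fa. \<forall>v\<in>supp fb. tdeg M \<ge> int (length v) + int (length w) - 1"
  shows "target M = sum (top_pair fa fb M) (supp fa \<times> supp fb)"
  using product[OF assms(1)] rho_product_top[OF fa fb assms(2)] by (simp add: target_def)

lemma sum_top_pair_concentrated:
  assumes P: "finite P" and zero: "\<forall>p\<in>supp fa \<times> supp fb - P. top_pair fa fb M p = 0"
  shows "sum (top_pair fa fb M) (supp fa \<times> supp fb) = sum (top_pair fa fb M) P"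
proof -
  have out: "\<forall>p\<in>P - supp fa \<times> supp fb. top_pair fa fb M p = 0"
    by (auto simp: top_pair_def supp_def)
  have fin: "finite (supp fa \<times> supp fb \<union> P)" using P finite_supp by simp
  have "sum (top_pair fa fb M) (supp fa \<times> supp fb) = sum (top_pair fa fb M) (supp fa \<times> supp fb \<union> P)"
    using out by (intro sum.mono_neutral_left[OF fin]) auto
  also have "\<dots> = sum (top_pair fa fb M) P"
    using zero by (intro sum.mono_neutral_right[OF fin]) auto
  finally show ?thesis .
qed

lemma words_length_le_1: "w \<in> supp fa \<Longrightarrow> length w \<le> 1" "v \<in> supp fb \<Longrightarrow> length v \<le> 1"
proof -
  let ?da = "Max (length ` supp fa)" and ?db = "Max (length ` supp fb)"
  have le_max: "\<And>w. w \<in> supp fa \<Longrightarrow> length w \<le> ?da" "\<And>v. v \<in> supp fb \<Longrightarrow> length v \<le> ?db"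
    using finite_supp by simp_all
  obtain w0 where w0: "w0 \<in> supp fa" "length w0 = ?da" "?da \<ge> 1"
      "\<forall>w\<in>supp fa. length w = ?da \<longrightarrow> word_exp w = word_exp w0 \<or> lex_less (word_exp w) (word_exp w0)"
    using lex_top_word[OF fa fa_nonconst] by blast
  obtain v0 where v0: "v0 \<in> supp fb" "length v0 = ?db" "?db \<ge> 1"
      "\<forall>v\<in>supp fb. length v = ?db \<longrightarrow> word_exp v = word_exp v0 \<or> lex_less (word_exp v) (word_exp v0)"
    using lex_top_word[OF fb fb_nonconst] by blast
  define M0 where "M0 = word_exp v0 + word_exp w0"
  have dM0: "tdeg M0 = int ?db + int ?da"
    unfolding M0_def using admissible_supp w0(1,2) v0(1,2) by (simp add: tdeg_add tdeg_word_exp)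
  have high: "\<forall>w\<in>supp fa. \<forall>v\<in>supp fb. tdeg M0 \<ge> int (length v) + int (length w) - 1"
  proof (intro ballI)
    fix w v assume "w \<in> supp fa" "v \<in> supp fb"
    then have "length w \<le> ?da" "length v \<le> ?db" by (simp_all add: le_max)
    then show "tdeg M0 \<ge> int (length v) + int (length w) - 1" unfolding dM0 by linarith
  qed
  have unique: "p = (w0, v0)" if "p \<in> supp fa \<times> supp fb" "word_exp (snd p) + word_exp (fst p) = M0" for p
    using unique_top_decomposition[OF fa fb w0(1) _ _ v0(1), of "fst p" "snd p"] that le_max
      w0(2,4) v0(2,4) unfolding M0_def by (cases p) simp
  have "M0 \<noteq> 0" using dM0 w0(3) v0(3) by auto
  then have "target M0 = sum (top_pair fa fb M0) (supp fa \<times> supp fb)"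
    using high by (rule target_eq_top_pairs)
  also have "\<dots> = sum (top_pair fa fb M0) {(w0, v0)}"
    using unique by (intro sum_top_pair_concentrated) (auto simp: top_pair_def delta_def)
  also have "\<dots> = fa w0 * fb v0 * word_lc w0 (word_exp v0)" by (simp add: top_pair_def M0_def delta_def)
  finally have "target M0 \<noteq> 0"
    using w0(1) v0(1) word_lc_nonzero[OF admissible_supp(1)[OF w0(1)]] by (simp add: supp_def)
  then have "tdeg M0 = 2" using target_tdeg by blast
  then have "?da = 1" "?db = 1" using dM0 w0(3) v0(3) by linarith+
  then show "w \<in> supp fa \<Longrightarrow> length w \<le> 1" "v \<in> supp fb \<Longrightarrow> length v \<le> 1" using le_max by force+
qed

lemma target_eq_top_pairs_deg1: "M \<noteq> 0 \<Longrightarrow> tdeg M \<ge> 1 \<Longrightarrow> target M = sum (top_pair fa fb M) (supp fa \<times> supp fb)"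
  using words_length_le_1 by (intro target_eq_top_pairs) fastforce+

lemma target_pair:
  assumes g: "gidx g \<in> {1..n}" and h: "gidx h \<in> {1..n}"
  shows "target (word_exp [g, h]) = fa [h] * fb [g] * word_lc [h] (word_exp [g])
     + (if g \<noteq> h then fa [g] * fb [h] * word_lc [g] (word_exp [h]) else 0)"
proof -
  let ?M = "word_exp [g, h]"
  have "tdeg ?M = 2" using g h tdeg_word_exp[of "[g, h]"] by (simp add: admissible_def)
  then have "target ?M = sum (top_pair fa fb ?M) (supp fa \<times> supp fb)"
    by (intro target_eq_top_pairs_deg1) auto
  also have "\<dots> = sum (top_pair fa fb ?M) {([h], [g]), ([g], [h])}"
  proof (intro sum_top_pair_concentrated ballI)
    fix p assume p: "p \<in> supp fa \<times> supp fb - {([h], [g]), ([g], [h])}"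
    then have "mset (snd p @ fst p) \<noteq> mset [g, h]"
      using mset_append_eq_pair[of "snd p" "fst p" g h] words_length_le_1 by (cases p) auto
    then show "top_pair fa fb ?M p = 0"
      by (simp add: top_pair_def delta_def word_exp_append[symmetric] word_exp_eq_iff)
  qed simp
  also have "\<dots> = fa [h] * fb [g] * word_lc [h] (word_exp [g])
     + (if g \<noteq> h then fa [g] * fb [h] * word_lc [g] (word_exp [h]) else 0)"
    by (simp add: top_pair_def delta_def word_exp_Cons add.commute)
  finally show ?thesis .
qed

lemma target_single:
  assumes g: "gidx g \<in> {1..n}"
  shows "target (word_exp [g]) = fa [] * fb [g] + fa [g] * fb [] * word_lc [g] 0"
proof -
  let ?M = "word_exp [g]"
  have "tdeg ?M = 1" using g tdeg_word_exp[of "[g]"] by (simp add: admissible_def)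
  then have "target ?M = sum (top_pair fa fb ?M) (supp fa \<times> supp fb)"
    by (intro target_eq_top_pairs_deg1) auto
  also have "\<dots> = sum (top_pair fa fb ?M) {([], [g]), ([g], [])}"
  proof (intro sum_top_pair_concentrated ballI)
    fix p assume p: "p \<in> supp fa \<times> supp fb - {([], [g]), ([g], [])}"
    then have "mset (snd p @ fst p) \<noteq> mset [g]"
      using mset_append_eq_single[of "snd p" "fst p" g] by (cases p) auto
    then show "top_pair fa fb ?M p = 0"
      by (simp add: top_pair_def delta_def word_exp_append[symmetric] word_exp_eq_iff)
  qed simp
  also have "\<dots> = fa [] * fb [g] + fa [g] * fb [] * word_lc [g] 0"
    by (simp add: top_pair_def delta_def)
  finally show ?thesis .
qed

fun partner :: "gen \<Rightarrow> gen" where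
  "partner (Y j) = X j"
| "partner (X j) = Y j"

lemma partner_partner [simp]: "partner (partner g) = g"
  by (cases g) simp_all

lemma target_pair_vanishes:
  assumes g: "gidx g \<in> {1..n}" and h: "gidx h \<in> {1..n}" and "h \<noteq> partner g"
  shows "target (word_exp [g, h]) = 0"
  unfolding target_def
proof (intro sum.neutral ballI)
  fix j
  have "mset [g, h] \<noteq> mset [Y j, X j]" using assms by (cases g) (auto simp: add_eq_conv_ex)
  then show "\<alpha> j * (q j - 1) * delta (word_exp [Y j, X j]) (word_exp [g, h]) = 0"
    by (simp add: delta_def word_exp_eq_iff)
qed

lemma target_single_vanishes: "gidx g \<in> {1..n} \<Longrightarrow> target (word_exp [g]) = 0"
  using tdeg_word_exp[of "[g]"] by (intro target_tdeg) (simp add: admissible_def)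

text \<open>A letter \<open>h\<close> occurring in one factor forces the other factor to consist of the
  partner of \<open>h\<close> alone: every other product of degree at most 2 is absent on the right-hand side.\<close>

lemma letters_of_fa:
  assumes h: "gidx h \<in> {1..n}" and fbh: "fb [h] \<noteq> 0"
  shows "fa [] = 0" and "\<And>x. gidx x \<in> {1..n} \<Longrightarrow> x \<noteq> partner h \<Longrightarrow> fa [x] = 0"
proof -
  have lc: "word_lc [x] e \<noteq> 0" if "gidx x \<in> {1..n}" for x e
    using word_lc_nonzero[of "[x]"] that by (simp add: admissible_def)
  have fah: "fa [h] = 0"
    using target_pair[OF h h] target_pair_vanishes[OF h h] fbh lc[OF h] by (cases h) auto
  show "fa [] = 0" using target_single[OF h] target_single_vanishes[OF h] fah fbh by simp
  fix x assume x: "gidx x \<in> {1..n}" "x \<noteq> partner h"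
  show "fa [x] = 0"
  proof (cases "x = h")
    case False
    then show ?thesis
      using target_pair[OF h x(1)] target_pair_vanishes[OF h x] fah fbh lc[OF x(1)] by simp
  qed (use fah in simp)
qed

lemma letters_of_fb:
  assumes h: "gidx h \<in> {1..n}" and fah: "fa [h] \<noteq> 0"
  shows "fb [] = 0" and "\<And>x. gidx x \<in> {1..n} \<Longrightarrow> x \<noteq> partner h \<Longrightarrow> fb [x] = 0"
proof -
  have lc: "word_lc [x] e \<noteq> 0" if "gidx x \<in> {1..n}" for x e
    using word_lc_nonzero[of "[x]"] that by (simp add: admissible_def)
  have fbh: "fb [h] = 0"
    using target_pair[OF h h] target_pair_vanishes[OF h h] fah lc[OF h] by (cases h) auto
  show "fb [] = 0" using target_single[OF h] target_single_vanishes[OF h] fah fbh lc[OF h] by simp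
  fix x assume x: "gidx x \<in> {1..n}" "x \<noteq> partner h"
  then have "h \<noteq> partner x" by auto
  show "fb [x] = 0"
  proof (cases "x = h")
    case False
    then show ?thesis
      using target_pair[OF x(1) h] target_pair_vanishes[OF x(1) h \<open>h \<noteq> partner x\<close>] fah fbh lc[OF h] by simp
  qed (use fbh in simp)
qed

lemma single_letter:
  assumes f: "ordered_poly f" "\<And>w. w \<in> supp f \<Longrightarrow> length w \<le> 1"
    and empty: "f [] = 0" and others: "\<And>x. gidx x \<in> {1..n} \<Longrightarrow> x \<noteq> u \<Longrightarrow> f [x] = 0"
  shows "f = ncsmult (f [u]) (ncgen u)"
proof (rule ext)
  fix w
  have "f w = 0" if "w \<noteq> [u]"
  proof (rule ccontr)
    assume nz: "f w \<noteq> 0"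
    then have "admissible w" "length w \<le> 1"
      using f by (auto simp: supp_def ordered_poly_def ordered_def)
    then show False using nz that empty others by (cases w) (auto simp: admissible_def)
  qed
  then show "f w = ncsmult (f [u]) (ncgen u) w" by (auto simp: ncsmult_def ncgen_def ncmono_def)
qed

lemma partner_factors:
  assumes u: "gidx u \<in> {1..n}" and fau: "fa [u] \<noteq> 0" and fbu: "fb [partner u] \<noteq> 0"
  shows "fa = ncsmult (fa [u]) (ncgen u) \<and> fb = ncsmult (fb [partner u]) (ncgen (partner u))"
proof
  have pu: "gidx (partner u) \<in> {1..n}" using u by (cases u) auto
  show "fa = ncsmult (fa [u]) (ncgen u)"
    using letters_of_fa[OF pu fbu] by (intro single_letter fa words_length_le_1) auto
  show "fb = ncsmult (fb [partner u]) (ncgen (partner u))"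
    using letters_of_fb[OF u fau] by (intro single_letter fb words_length_le_1) auto
qed

lemma factors_are_generators:
  assumes i: "i \<in> {1..n}" and \<alpha>i: "\<alpha> i \<noteq> 0"
  shows "\<exists>c d. c \<noteq> 0 \<and> d \<noteq> 0 \<and> ((fa = ncsmult c (ncgen (Y i)) \<and> fb = ncsmult d (ncgen (X i)))
          \<or> (fa = ncsmult c (ncgen (X i)) \<and> fb = ncsmult d (ncgen (Y i))))"
proof -
  have "target (word_exp [Y i, X i]) = \<alpha> i * (q i - 1)"
  proof -
    have "(word_exp [Y i, X i] = word_exp [Y j, X j]) = (j = i)" for j
      by (auto simp: word_exp_eq_iff add_eq_conv_ex)
    then show ?thesis using i by (simp add: target_def delta_def if_distrib cong: if_cong)
  qed
  moreover have "q i - 1 \<noteq> 0" using q_ne1 i by auto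
  ultimately have "fa [X i] * fb [Y i] \<noteq> 0 \<or> fa [Y i] * fb [X i] \<noteq> 0"
    using target_pair[of "Y i" "X i"] i \<alpha>i by auto
  then show ?thesis
  proof
    assume "fa [X i] * fb [Y i] \<noteq> 0"
    then show ?thesis using partner_factors[of "X i"] i by auto
  next
    assume "fa [Y i] * fb [X i] \<noteq> 0"
    then show ?thesis using partner_factors[of "Y i"] i by auto
  qed
qed

end

theorem lemma2p1:
  fixes n i :: nat and q :: "nat \<Rightarrow> 'k::field" and L :: "nat \<Rightarrow> nat \<Rightarrow> 'k"
    and a b :: "'k ncpoly" and \<alpha> :: "nat \<Rightarrow> 'k"
  assumes n: "n \<ge> 1"
    and q_nz: "\<forall>k\<in>{1..n}. q k \<noteq> 0"
    and q_nroot: "\<forall>k\<in>{1..n}. \<forall>m::nat. m > 0 \<longrightarrow> q k ^ m \<noteq> 1"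
    and L_nz: "\<forall>k\<in>{1..n}. \<forall>l\<in>{1..n}. L k l \<noteq> 0"
    and L_inv: "\<forall>k\<in>{1..n}. \<forall>l\<in>{1..n}. L k l = inverse (L l k)"
    and L_diag: "\<forall>k\<in>{1..n}. L k k = 1"
    and i: "i \<in> {1..n}"
    and a: "free_elem n a" and b: "free_elem n b"
    and aK: "\<not> weyl_in_K n q L a" and bK: "\<not> weyl_in_K n q L b"
    and ab: "weyl_eq n q L (ncmul a b) (\<lambda>u. \<Sum>j=0..n. \<alpha> j * weyl_z j u)"
    and \<alpha>i: "\<alpha> i \<noteq> 0"
  shows "\<exists>c d. c \<noteq> 0 \<and> d \<noteq> 0 \<and>
           ((weyl_eq n q L a (ncsmult c (ncgen (Y i))) \<and> weyl_eq n q L b (ncsmult d (ncgen (X i))))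
          \<or> (weyl_eq n q L a (ncsmult c (ncgen (X i))) \<and> weyl_eq n q L b (ncsmult d (ncgen (Y i)))))"
proof -
  have "\<forall>k\<in>{1..n}. q k \<noteq> 1" using q_nroot by (metis power_one_right zero_less_one)
  moreover have "\<forall>k\<in>{1..n}. \<forall>l\<in>{1..n}. L k l * L l k = 1"
    using L_inv L_nz by (metis left_inverse)
  ultimately interpret qweyl n q L using q_nz L_nz by unfold_locales
  have fin: "finite (supp a)" "finite (supp b)" and adm: "\<forall>w\<in>supp a. admissible w" "\<forall>w\<in>supp b. admissible w"
    using a b by (auto simp: free_elem_def supp_def admissible_def)
  obtain fa where a_form: "ordered_poly fa" "weyl_eq n q L a fa" using ordered_form[OF fin(1) adm(1)] by blast
  obtain fb where b_form: "ordered_poly fb" "weyl_eq n q L b fb" using ordered_form[OF fin(2) adm(2)] by blast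
  interpret ordered_product n q L fa fb \<alpha>
  proof
    show "rho fa (rho fb (delta 0)) M = (\<Sum>j\<in>{1..n}. \<alpha> j * (q j - 1) * delta (word_exp [Y j, X j]) M)"
      if "M \<noteq> 0" for M
      using product_identity[OF fin(1) a_form fin(2) b_form ab that] .
  qed (use a_form b_form aK bK nonconstant_has_nonempty_word in \<open>auto simp: ordered_poly_def\<close>)
  show ?thesis using factors_are_generators[OF i \<alpha>i] a_form(2) b_form(2) by blast
qed

end
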